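(* Let $(X,e\colon X\to M\otimes X)$ be a coalgebra for $F$ on $\mathbf{Met_3}^{C}$ and let $f\colon X\to S$ be given by $f(x)=\lim_{n\to\infty}\theta_n(x)$, where for $x\in X$: $\chi_0=x$, $\chi_n=(M^{n-1}\otimes e)(\chi_{n-1})$, $m_0,m_1,\ldots\in M$ are chosen with $\chi_n=m_0\otimes\cdots\otimes m_{n-1}\otimes x_n$ for all $n$, and $\theta_n(x)=m_0\otimes\cdots\otimes m_{n-1}\otimes z\in G$ for a fixed $z\in\{T,L,R\}$ (this limit exists and is independent of the choices). Then $f$ is continuous, and is therefore a morphism in $\mathbf{Met_3}^{C}$.
   Context: A tripointed metric space is a set with three distinct points $T,L,R$ and a metric bounded by $1$ in which $T,L,R$ have pairwise distance $1$. $\mathbf{Met_3}^{C}$: tripointed metric spaces with continuous maps preserving $T,L,R$. Let $M=\{a,b,c\}$. $M\times X$ has metric $\tfrac12d(x,y)$ within a copy and $1$ between copies; $M\otimes X$ is the quotient metric space by the equivalence relation generated by $(b,T)\sim(a,L)$, $(a,R)\sim(c,T)$, $(c,L)\sim(b,R)$, elements $m\otimes x$, distinguished points $a\otimes T,b\otimes L,c\otimes R$; $F=M\otimes-$, $(M\otimes f)(m\otimes x)=m\otimes f(x)$; $M^n\otimes-$ is the $n$-fold iterate. A coalgebra is $(X,e\colon X\to FX)$. With $I=\{T,L,R\}$ discrete and $!\colon I\to FI$ ($T\mapsto a\otimes T$, $L\mapsto b\otimes L$, $R\mapsto c\otimes R$), $G$ is the metric union of the chain of isometric embeddings $I\to FI\to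 F^2I\to\cdots$ (elements: expressions $m_0\otimes\cdots\otimes m_{n-1}\otimes z$ modulo induced identifications). $S$ is the Cauchy completion of $G$, with distinguished points $T,L,R$. *)

theory Defs
  imports Complex_Main "HOL-Library.FSet"
begin

datatype mm = Ma | Mb | Mc
datatype pt = PT | PL | PR

text \<open>Universal carrier for iterated tensors: an element of M (x) Y is an
  equivalence class (a finite set) of pairs (m,y).\<close>
datatype 'a tm = Base 'a | Cls "(mm \<times> 'a tm) fset"

record 'v tsp =
  car :: "'v set"
  dst :: "'v \<Rightarrow> 'v \<Rightarrow> real"
  pT :: 'v
  pL :: 'v
  pR :: 'v

definition tripointed :: "('v, 'z) tsp_scheme \<Rightarrow> bool" where
  "tripointed X \<longleftrightarrow>
     pT X \<in> car X \<and> pL X \<in> car X \<and> pR X \<in> car X \<and>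
     pT X \<noteq> pL X \<and> pL X \<noteq> pR X \<and> pT X \<noteq> pR X \<and>
     (\<forall>x\<in>car X. \<forall>y\<in>car X. 0 \<le> dst X x y \<and> dst X x y \<le> 1 \<and>
        (dst X x y = 0 \<longleftrightarrow> x = y) \<and> dst X x y = dst X y x) \<and>
     (\<forall>x\<in>car X. \<forall>y\<in>car X. \<forall>w\<in>car X. dst X x w \<le> dst X x y + dst X y w) \<and>
     dst X (pT X) (pL X) = 1 \<and> dst X (pL X) (pR X) = 1 \<and> dst X (pT X) (pR X) = 1"

definition cont_sp :: "'a tsp \<Rightarrow> 'b tsp \<Rightarrow> ('a \<Rightarrow> 'b) \<Rightarrow> bool" where
  "cont_sp X Y f \<longleftrightarrow>
     (\<forall>x\<in>car X. \<forall>\<epsilon>>0. \<exists>\<delta>>0. \<forall>y\<in>car X. dst X x y < \<delta> \<longrightarrow> dst Y (f x) (f y) < \<epsilon>)"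

definition morphism :: "'a tsp \<Rightarrow> 'b tsp \<Rightarrow> ('a \<Rightarrow> 'b) \<Rightarrow> bool" where
  "morphism X Y f \<longleftrightarrow> f ` car X \<subseteq> car Y \<and> cont_sp X Y f \<and>
     f (pT X) = pT Y \<and> f (pL X) = pL Y \<and> f (pR X) = pR Y"

fun dprod :: "'v tsp \<Rightarrow> mm \<times> 'v \<Rightarrow> mm \<times> 'v \<Rightarrow> real" where
  "dprod Y (m, x) (m', x') = (if m = m' then dst Y x x' / 2 else 1)"

definition gen :: "'v tsp \<Rightarrow> ((mm \<times> 'v) \<times> (mm \<times> 'v)) set" where
  "gen Y = {((Mb, pT Y), (Ma, pL Y)), ((Ma, pR Y), (Mc, pT Y)), ((Mc, pL Y), (Mb, pR Y))}"

definition eqr :: "'v tsp \<Rightarrow> ((mm \<times> 'v) \<times> (mm \<times> 'v)) set" where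
  "eqr Y = (gen Y \<union> (gen Y)\<inverse>)\<^sup>*"

definition cls :: "'v tsp \<Rightarrow> mm \<times> 'v \<Rightarrow> (mm \<times> 'v) fset" where
  "cls Y p = Abs_fset {q. (p, q) \<in> eqr Y}"

definition tens :: "'a tm tsp \<Rightarrow> mm \<Rightarrow> 'a tm \<Rightarrow> 'a tm" where
  "tens Y m y = Cls (cls Y (m, y))"

fun clsOf :: "'a tm \<Rightarrow> (mm \<times> 'a tm) fset" where
  "clsOf (Cls A) = A"
| "clsOf (Base _) = {||}"

definition qd :: "'a tm tsp \<Rightarrow> 'a tm \<Rightarrow> 'a tm \<Rightarrow> real" where
  "qd Y u v = Inf {(\<Sum>i<k. dprod Y (p i) (q i)) | k p q.
      0 < k \<and> p 0 |\<in>| clsOf u \<and> q (k - 1) |\<in>| clsOf v \<and>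
      (\<forall>i<k. p i \<in> (UNIV :: mm set) \<times> car Y \<and> q i \<in> (UNIV :: mm set) \<times> car Y) \<and>
      (\<forall>i. Suc i < k \<longrightarrow> (q i, p (Suc i)) \<in> eqr Y)}"

definition tensor :: "'a tm tsp \<Rightarrow> 'a tm tsp" where
  "tensor Y = \<lparr> car = {tens Y m y | m y. y \<in> car Y}, dst = qd Y,
      pT = tens Y Ma (pT Y), pL = tens Y Mb (pL Y), pR = tens Y Mc (pR Y) \<rparr>"

definition Fpow :: "'a tm tsp \<Rightarrow> nat \<Rightarrow> 'a tm tsp" where
  "Fpow Y n = (tensor ^^ n) Y"

text \<open>M^k (x) h, for h : Y -> Y' (so M^k (x) h : F^k Y -> F^k Y').\<close>
fun Mmap :: "'a tm tsp \<Rightarrow> nat \<Rightarrow> ('a tm \<Rightarrow> 'a tm) \<Rightarrow> 'a tm \<Rightarrow> 'a tm" where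
  "Mmap Y' 0 h u = h u"
| "Mmap Y' (Suc k) h u =
     (let p = (SOME p. p |\<in>| clsOf u) in tens (Fpow Y' k) (fst p) (Mmap Y' k h (snd p)))"

fun unB :: "'a tm \<Rightarrow> 'a" where
  "unB (Base x) = x"
| "unB (Cls _) = undefined"

definition liftB :: "('a \<Rightarrow> 'b) \<Rightarrow> 'a tm \<Rightarrow> 'b" where
  "liftB h u = h (unB u)"

definition embX :: "'a tsp \<Rightarrow> 'a tm tsp" where
  "embX X = \<lparr> car = Base ` car X, dst = (\<lambda>u v. dst X (unB u) (unB v)),
      pT = Base (pT X), pL = Base (pL X), pR = Base (pR X) \<rparr>"

definition FX :: "'a tsp \<Rightarrow> 'a tm tsp" where
  "FX X = tensor (embX X)"

definition coalgebra :: "'a tsp \<Rightarrow> ('a \<Rightarrow> 'a tm) \<Rightarrow> bool" where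
  "coalgebra X e \<longleftrightarrow> tripointed X \<and> morphism X (FX X) e"

primrec chi :: "'a tsp \<Rightarrow> ('a \<Rightarrow> 'a tm) \<Rightarrow> 'a \<Rightarrow> nat \<Rightarrow> 'a tm" where
  "chi X e x 0 = Base x"
| "chi X e x (Suc n) = Mmap (FX X) n (liftB e) (chi X e x n)"

fun wordT :: "'a tm tsp \<Rightarrow> mm list \<Rightarrow> 'a tm \<Rightarrow> 'a tm" where
  "wordT Y [] z = z"
| "wordT Y (m # ms) z = tens (Fpow Y (length ms)) m (wordT Y ms z)"

definition repr :: "'a tsp \<Rightarrow> ('a \<Rightarrow> 'a tm) \<Rightarrow> 'a \<Rightarrow> (nat \<Rightarrow> mm) \<Rightarrow> bool" where
  "repr X e x ms \<longleftrightarrow> (\<exists>xs. \<forall>n. xs n \<in> car X \<and>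
       chi X e x n = wordT (embX X) (map ms [0..<n]) (Base (xs n)))"

definition Ipt :: "pt tsp" where
  "Ipt = \<lparr> car = UNIV, dst = (\<lambda>a b. if a = b then 0 else 1), pT = PT, pL = PL, pR = PR \<rparr>"

definition embI :: "pt tm tsp" where
  "embI = embX Ipt"

fun mOf :: "pt \<Rightarrow> mm" where
  "mOf PT = Ma" | "mOf PL = Mb" | "mOf PR = Mc"

definition bang :: "pt tm \<Rightarrow> pt tm" where
  "bang = liftB (\<lambda>z. tens embI (mOf z) (Base z))"

text \<open>The chain embedding F^k I -> F^(k+1) I, namely F^k(!).\<close>
definition emb :: "nat \<Rightarrow> pt tm \<Rightarrow> pt tm" where
  "emb k = Mmap (tensor embI) k bang"

primrec embUp :: "nat \<Rightarrow> nat \<Rightarrow> pt tm \<Rightarrow> pt tm" where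
  "embUp n 0 g = g"
| "embUp n (Suc j) g = emb (n + j) (embUp n j g)"

definition Gcar :: "(nat \<times> pt tm) set" where
  "Gcar = {(n, g). g \<in> car (Fpow embI n)}"

text \<open>Metric of the union G (on representatives (n, g) with g in F^n I).\<close>
fun dG :: "nat \<times> pt tm \<Rightarrow> nat \<times> pt tm \<Rightarrow> real" where
  "dG (n, g) (k, h) = dst (Fpow embI (max n k))
      (embUp n (max n k - n) g) (embUp k (max n k - k) h)"

definition cauchyG :: "(nat \<Rightarrow> nat \<times> pt tm) \<Rightarrow> bool" where
  "cauchyG \<sigma> \<longleftrightarrow> (\<forall>n. \<sigma> n \<in> Gcar) \<and>
     (\<forall>\<epsilon>>0. \<exists>N. \<forall>m\<ge>N. \<forall>n\<ge>N. dG (\<sigma> m) (\<sigma> n) < \<epsilon>)"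

definition classS :: "(nat \<Rightarrow> nat \<times> pt tm) \<Rightarrow> (nat \<Rightarrow> nat \<times> pt tm) set" where
  "classS \<sigma> = {\<tau>. cauchyG \<tau> \<and> (\<lambda>n. dG (\<sigma> n) (\<tau> n)) \<longlonglongrightarrow> 0}"

definition Scar :: "(nat \<Rightarrow> nat \<times> pt tm) set set" where
  "Scar = classS ` {\<sigma>. cauchyG \<sigma>}"

definition dS :: "(nat \<Rightarrow> nat \<times> pt tm) set \<Rightarrow> (nat \<Rightarrow> nat \<times> pt tm) set \<Rightarrow> real" where
  "dS A B = lim (\<lambda>n. dG ((SOME \<sigma>. \<sigma> \<in> A) n) ((SOME \<tau>. \<tau> \<in> B) n))"

definition iotaG :: "nat \<times> pt tm \<Rightarrow> (nat \<Rightarrow> nat \<times> pt tm) set" where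
  "iotaG g = classS (\<lambda>_. g)"

definition Ssp :: "(nat \<Rightarrow> nat \<times> pt tm) set tsp" where
  "Ssp = \<lparr> car = Scar, dst = dS,
      pT = iotaG (0, Base PT), pL = iotaG (0, Base PL), pR = iotaG (0, Base PR) \<rparr>"

definition theta :: "(nat \<Rightarrow> mm) \<Rightarrow> pt \<Rightarrow> nat \<Rightarrow> nat \<times> pt tm" where
  "theta ms z n = (n, wordT embI (map ms [0..<n]) (Base z))"

definition fmap :: "'a tsp \<Rightarrow> ('a \<Rightarrow> 'a tm) \<Rightarrow> pt \<Rightarrow> 'a \<Rightarrow> (nat \<Rightarrow> nat \<times> pt tm) set" where
  "fmap X e z x = (THE s. s \<in> Scar \<and>
      (\<lambda>n. dS (iotaG (theta (SOME ms. repr X e x ms) z n)) s) \<longlonglongrightarrow> 0)"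

end

theory Submission
  imports Defs
begin

text \<open>The quotient metric of \<open>M \<otimes> Y\<close> can be computed: inside one copy it is half the distance
  of \<open>Y\<close>, and between two copies it is, up to the cap \<open>1/2\<close>, half the sum of the distances to
  the two glued corners (lower bounds come from potentials that are 1-Lipschitz and constant on glued
  pairs).  Consequently two words \<open>m\<^sub>0 \<otimes> \<dots> \<otimes> m\<^sub>n\<^sub>-\<^sub>1 \<otimes> y\<close> that are \<open>2\<^sup>-\<^sup>n/4\<close>-close in
  \<open>F\<^sup>n X\<close> remain \<open>2 \<cdot> 2\<^sup>-\<^sup>n\<close>-close after their base points are replaced by \<open>z\<close>.  Since \<open>e\<close> and
  hence every \<open>\<chi>\<^sub>n\<close> is continuous, \<open>\<theta>\<^sub>n(y)\<close> is \<open>2 \<cdot> 2\<^sup>-\<^sup>n\<close>-close to \<open>\<theta>\<^sub>n(x)\<close> for \<open>y\<close> near \<open>x\<close>; as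
  \<open>\<theta>\<^sub>k\<close> converges at rate \<open>2\<^sup>-\<^sup>k\<close>, \<open>f(y)\<close> is then \<open>4 \<cdot> 2\<^sup>-\<^sup>n\<close>-close to \<open>f(x)\<close>.  The corners of \<open>X\<close> are mapped by \<open>e\<close> to
  the corners of \<open>M \<otimes> X\<close>, so their words are constant and \<open>f\<close> preserves \<open>T, L, R\<close>.\<close>

section \<open>The gluing relation\<close>

lemma eqr_refl [simp]: "(p, p) \<in> eqr Y"
  unfolding eqr_def by simp

lemma eqr_sym: "(p, q) \<in> eqr Y \<Longrightarrow> (q, p) \<in> eqr Y"
  unfolding eqr_def by (metis converse_Un converse_converse rtrancl_converseI sup_commute)

lemma eqr_trans: "(p, q) \<in> eqr Y \<Longrightarrow> (q, r) \<in> eqr Y \<Longrightarrow> (p, r) \<in> eqr Y"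
  unfolding eqr_def by (rule rtrancl_trans)

lemma gen_in_eqr: "(p, q) \<in> gen Y \<Longrightarrow> (p, q) \<in> eqr Y"
  unfolding eqr_def by auto

lemma gen_in_eqr_converse: "(p, q) \<in> gen Y \<Longrightarrow> (q, p) \<in> eqr Y"
  unfolding eqr_def by auto

lemma finite_eqr_class: "finite {q. (p, q) \<in> eqr Y}"
proof -
  have "{q. (p, q) \<in> eqr Y} \<subseteq> insert p (Range (gen Y \<union> (gen Y)\<inverse>))"
    unfolding eqr_def by (auto elim: rtranclE)
  moreover have "finite (Range (gen Y \<union> (gen Y)\<inverse>))"
    by (simp add: gen_def)
  ultimately show ?thesis
    by (meson finite_insert finite_subset)
qed

lemma mem_clsOf_tens: "q |\<in>| clsOf (tens Y m y) \<longleftrightarrow> ((m, y), q) \<in> eqr Y"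
  unfolding tens_def cls_def using finite_eqr_class[of "(m, y)" Y]
  by (simp add: Abs_fset_inverse)

lemma mem_clsOf_tens_self [simp]: "(m, y) |\<in>| clsOf (tens Y m y)"
  by (simp add: mem_clsOf_tens)

lemma tens_eqI: "((m, y), (k, w)) \<in> eqr Y \<Longrightarrow> tens Y m y = tens Y k w"
  unfolding tens_def cls_def by (metis eqr_sym eqr_trans)

lemma eqr_image:
  assumes "\<And>p q. (p, q) \<in> gen Y \<Longrightarrow> (f p, f q) \<in> gen Y'"
  shows "(p, q) \<in> eqr Y \<Longrightarrow> (f p, f q) \<in> eqr Y'"
  unfolding eqr_def
proof (induction rule: rtrancl_induct)
  case (step q r)
  then have "(f q, f r) \<in> gen Y' \<union> (gen Y')\<inverse>"
    using assms by blast
  with step.IH show ?case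
    by (rule rtrancl_into_rtrancl)
qed simp

lemma eqr_invariant:
  assumes "\<And>p q. (p, q) \<in> gen Y \<Longrightarrow> \<phi> p = \<phi> q"
  shows "(p, q) \<in> eqr Y \<Longrightarrow> \<phi> p = \<phi> q"
  unfolding eqr_def
proof (induction rule: rtrancl_induct)
  case (step q r)
  then show ?case
    using assms by (metis UnE converseD)
qed simp

section \<open>Tripointed spaces and their corners\<close>

lemma tripointed_dst:
  "tripointed Y \<Longrightarrow> \<forall>x\<in>car Y. \<forall>y\<in>car Y. 0 \<le> dst Y x y \<and> dst Y x y \<le> 1 \<and>
     (dst Y x y = 0 \<longleftrightarrow> x = y) \<and> dst Y x y = dst Y y x"
  unfolding tripointed_def by (elim conjE)

lemma tripointed_dst_nonneg: "tripointed Y \<Longrightarrow> x \<in> car Y \<Longrightarrow> y \<in> car Y \<Longrightarrow> 0 \<le> dst Y x y"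
  using tripointed_dst by blast

lemma tripointed_dst_le_1: "tripointed Y \<Longrightarrow> x \<in> car Y \<Longrightarrow> y \<in> car Y \<Longrightarrow> dst Y x y \<le> 1"
  using tripointed_dst by blast

lemma tripointed_dst_eq_0_iff:
  "tripointed Y \<Longrightarrow> x \<in> car Y \<Longrightarrow> y \<in> car Y \<Longrightarrow> dst Y x y = 0 \<longleftrightarrow> x = y"
  using tripointed_dst by blast

lemma tripointed_dst_self: "tripointed Y \<Longrightarrow> x \<in> car Y \<Longrightarrow> dst Y x x = 0"
  by (simp add: tripointed_dst_eq_0_iff)

lemma tripointed_dst_commute: "tripointed Y \<Longrightarrow> x \<in> car Y \<Longrightarrow> y \<in> car Y \<Longrightarrow> dst Y x y = dst Y y x"
  using tripointed_dst by blast

lemma tripointed_dst_triangle: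
  "tripointed Y \<Longrightarrow> x \<in> car Y \<Longrightarrow> y \<in> car Y \<Longrightarrow> w \<in> car Y \<Longrightarrow> dst Y x w \<le> dst Y x y + dst Y y w"
  unfolding tripointed_def by (elim conjE) blast

fun corner :: "pt \<Rightarrow> ('v, 'z) tsp_scheme \<Rightarrow> 'v" where
  "corner PT Y = pT Y"
| "corner PL Y = pL Y"
| "corner PR Y = pR Y"

lemma corner_in_car: "tripointed Y \<Longrightarrow> corner P Y \<in> car Y"
  by (cases P) (simp_all add: tripointed_def)

lemma dst_pts:
  assumes "tripointed Y"
  shows "dst Y (pT Y) (pL Y) = 1" "dst Y (pL Y) (pR Y) = 1" "dst Y (pT Y) (pR Y) = 1"
    and "dst Y (pL Y) (pT Y) = 1" "dst Y (pR Y) (pL Y) = 1" "dst Y (pR Y) (pT Y) = 1"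
    and "dst Y (pT Y) (pT Y) = 0" "dst Y (pL Y) (pL Y) = 0" "dst Y (pR Y) (pR Y) = 0"
proof -
  have c: "pT Y \<in> car Y" "pL Y \<in> car Y" "pR Y \<in> car Y"
    using assms by (simp_all add: tripointed_def)
  show d: "dst Y (pT Y) (pL Y) = 1" "dst Y (pL Y) (pR Y) = 1" "dst Y (pT Y) (pR Y) = 1"
    using assms by (simp_all add: tripointed_def)
  show "dst Y (pL Y) (pT Y) = 1" "dst Y (pR Y) (pL Y) = 1" "dst Y (pR Y) (pT Y) = 1"
    using c d tripointed_dst_commute[OF assms] by metis+
  show "dst Y (pT Y) (pT Y) = 0" "dst Y (pL Y) (pL Y) = 0" "dst Y (pR Y) (pR Y) = 0"
    using c tripointed_dst_self[OF assms] by simp_all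
qed

lemma dst_corners:
  "tripointed Y \<Longrightarrow> dst Y (corner P Y) (corner P' Y) = (if P = P' then 0 else 1)"
  by (cases P; cases P') (simp_all add: dst_pts)

text \<open>For \<open>m \<noteq> k\<close>, \<open>glue m k\<close> is the corner of copy \<open>m\<close> that \<open>M \<otimes> Y\<close> identifies with a corner of
  copy \<open>k\<close> (the diagonal \<open>glue m m\<close> is left unspecified).\<close>
fun glue :: "mm \<Rightarrow> mm \<Rightarrow> pt" where
  "glue Ma Mb = PL" | "glue Ma Mc = PR" | "glue Mb Ma = PT"
| "glue Mb Mc = PR" | "glue Mc Ma = PT" | "glue Mc Mb = PL"

lemma glue_neq: "m \<noteq> mOf P \<Longrightarrow> glue (mOf P) m \<noteq> P"
  by (cases P; cases m) simp_all

lemma glue_eqr: "m \<noteq> k \<Longrightarrow> ((m, corner (glue m k) Y), (k, corner (glue k m) Y)) \<in> eqr Y"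
  by (cases m; cases k) (auto simp: gen_def intro: gen_in_eqr gen_in_eqr_converse)

lemma genE:
  assumes "(p, q) \<in> gen Y"
  obtains "p = (Mb, pT Y)" "q = (Ma, pL Y)"
        | "p = (Ma, pR Y)" "q = (Mc, pT Y)"
        | "p = (Mc, pL Y)" "q = (Mb, pR Y)"
  using assms by (auto simp: gen_def)

section \<open>The quotient metric on \<open>M \<otimes> Y\<close>\<close>

lemma car_tensor: "car (tensor Y) = {tens Y m y | m y. y \<in> car Y}"
  by (simp add: tensor_def)

lemma tens_in_car_tensor: "y \<in> car Y \<Longrightarrow> tens Y m y \<in> car (tensor Y)"
  by (auto simp: car_tensor)

lemma car_tensorE:
  assumes "u \<in> car (tensor Y)"
  obtains m y where "u = tens Y m y" "y \<in> car Y"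
  using assms by (auto simp: car_tensor)

lemma dst_tensor: "dst (tensor Y) = qd Y"
  by (simp add: tensor_def)

lemma corner_tensor: "corner P (tensor Y) = tens Y (mOf P) (corner P Y)"
  by (cases P) (simp_all add: tensor_def)

lemma dprod_nonneg: "tripointed Y \<Longrightarrow> snd p \<in> car Y \<Longrightarrow> snd q \<in> car Y \<Longrightarrow> 0 \<le> dprod Y p q"
  using tripointed_dst_nonneg[of Y "snd p" "snd q"] by (cases p; cases q) auto

lemma dprod_le_1: "tripointed Y \<Longrightarrow> snd p \<in> car Y \<Longrightarrow> snd q \<in> car Y \<Longrightarrow> dprod Y p q \<le> 1"
  using tripointed_dst_le_1[of Y "snd p" "snd q"] by (cases p; cases q) auto

lemma dprod_commute: "tripointed Y \<Longrightarrow> snd p \<in> car Y \<Longrightarrow> snd q \<in> car Y \<Longrightarrow> dprod Y p q = dprod Y q p"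
  using tripointed_dst_commute[of Y "snd p" "snd q"] by (cases p; cases q) auto

definition qd_chain :: "'a tm tsp \<Rightarrow> 'a tm \<Rightarrow> 'a tm \<Rightarrow> nat \<Rightarrow>
    (nat \<Rightarrow> mm \<times> 'a tm) \<Rightarrow> (nat \<Rightarrow> mm \<times> 'a tm) \<Rightarrow> bool" where
  "qd_chain Y u v k p q \<longleftrightarrow> 0 < k \<and> p 0 |\<in>| clsOf u \<and> q (k - 1) |\<in>| clsOf v \<and>
      (\<forall>i<k. snd (p i) \<in> car Y \<and> snd (q i) \<in> car Y) \<and>
      (\<forall>i. Suc i < k \<longrightarrow> (q i, p (Suc i)) \<in> eqr Y)"

abbreviation chain_len :: "'a tm tsp \<Rightarrow> nat \<Rightarrow> (nat \<Rightarrow> mm \<times> 'a tm) \<Rightarrow> (nat \<Rightarrow> mm \<times> 'a tm) \<Rightarrow> real" where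
  "chain_len Y k p q \<equiv> \<Sum>i<k. dprod Y (p i) (q i)"

lemma qd_Inf_chains: "qd Y u v = Inf {chain_len Y k p q | k p q. qd_chain Y u v k p q}"
  unfolding qd_def qd_chain_def by (simp add: mem_Times_iff)

lemma chain_len_nonneg: "tripointed Y \<Longrightarrow> qd_chain Y u v k p q \<Longrightarrow> 0 \<le> chain_len Y k p q"
  unfolding qd_chain_def by (auto intro!: sum_nonneg dprod_nonneg)

lemma qd_le_chain_len: "tripointed Y \<Longrightarrow> qd_chain Y u v k p q \<Longrightarrow> qd Y u v \<le> chain_len Y k p q"
  unfolding qd_Inf_chains
  by (rule cInf_lower) (auto intro: bdd_belowI[where m = 0] dest: chain_len_nonneg)

lemma qd_chain_single:
  "y \<in> car Y \<Longrightarrow> w \<in> car Y \<Longrightarrow> qd_chain Y (tens Y m y) (tens Y k w) 1 (\<lambda>_. (m, y)) (\<lambda>_. (k, w))"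
  unfolding qd_chain_def by simp

lemma qd_chain_exists:
  assumes "u \<in> car (tensor Y)" and "v \<in> car (tensor Y)"
  shows "\<exists>k p q. qd_chain Y u v k p q"
  using assms by (elim car_tensorE) (metis qd_chain_single)

lemma qd_approx:
  assumes "tripointed Y" "u \<in> car (tensor Y)" "v \<in> car (tensor Y)" "qd Y u v < c"
  obtains k p q where "qd_chain Y u v k p q" "chain_len Y k p q < c"
proof -
  let ?C = "{chain_len Y k p q | k p q. qd_chain Y u v k p q}"
  have "?C \<noteq> {}"
    using qd_chain_exists[OF assms(2,3)] by blast
  from cInf_lessD[OF this assms(4)[unfolded qd_Inf_chains]]
  obtain c' where "c' \<in> ?C" "c' < c"
    by blast
  then show ?thesis
    using that by blast
qed

lemma qd_tens_le_dprod:
  "tripointed Y \<Longrightarrow> y \<in> car Y \<Longrightarrow> w \<in> car Y \<Longrightarrow> qd Y (tens Y m y) (tens Y k w) \<le> dprod Y (m, y) (k, w)"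
  using qd_le_chain_len[OF _ qd_chain_single] by fastforce

text \<open>Lower bounds for \<open>qd\<close> come from potentials: a function on \<open>M \<times> Y\<close> that is constant on glued
  pairs and 1-Lipschitz for \<open>dprod\<close> can only grow by the length of a chain along it.\<close>
lemma chain_potential_bound:
  assumes inv: "\<And>p q. (p, q) \<in> eqr Y \<Longrightarrow> \<phi> p = \<phi> q"
    and lip: "\<And>p q. snd p \<in> car Y \<Longrightarrow> snd q \<in> car Y \<Longrightarrow> \<phi> q - \<phi> p \<le> dprod Y p q"
    and ch: "qd_chain Y u v k p q"
  shows "\<phi> (q (k - 1)) - \<phi> (p 0) \<le> chain_len Y k p q"
proof -
  have "j < k \<Longrightarrow> \<phi> (q j) - \<phi> (p 0) \<le> chain_len Y (Suc j) p q" for j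
  proof (induction j)
    case 0
    then show ?case
      using ch lip unfolding qd_chain_def by auto
  next
    case (Suc j)
    have "\<phi> (p (Suc j)) = \<phi> (q j)"
      using ch Suc.prems inv unfolding qd_chain_def by metis
    moreover have "\<phi> (q (Suc j)) - \<phi> (p (Suc j)) \<le> dprod Y (p (Suc j)) (q (Suc j))"
      using ch Suc.prems lip unfolding qd_chain_def by auto
    ultimately show ?case
      using Suc by simp
  qed
  moreover have "k - 1 < k" "Suc (k - 1) = k"
    using ch unfolding qd_chain_def by auto
  ultimately show ?thesis
    by metis
qed

lemma qd_ge_potential:
  assumes inv: "\<And>p q. (p, q) \<in> gen Y \<Longrightarrow> \<phi> p = \<phi> q"
    and lip: "\<And>p q. snd p \<in> car Y \<Longrightarrow> snd q \<in> car Y \<Longrightarrow> \<phi> q - \<phi> p \<le> dprod Y p q"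
    and y: "y \<in> car Y" and w: "w \<in> car Y"
  shows "\<phi> (k, w) - \<phi> (m, y) \<le> qd Y (tens Y m y) (tens Y k w)"
  unfolding qd_Inf_chains
proof (rule cInf_greatest)
  show "{chain_len Y n p q | n p q. qd_chain Y (tens Y m y) (tens Y k w) n p q} \<noteq> {}"
    using qd_chain_single[OF y w] by blast
next
  have inv': "\<And>p q. (p, q) \<in> eqr Y \<Longrightarrow> \<phi> p = \<phi> q"
    using eqr_invariant[of Y \<phi>] inv by blast
  fix c
  assume "c \<in> {chain_len Y n p q | n p q. qd_chain Y (tens Y m y) (tens Y k w) n p q}"
  then obtain n p q where ch: "qd_chain Y (tens Y m y) (tens Y k w) n p q" and c: "c = chain_len Y n p q"
    by blast
  have "\<phi> (q (n - 1)) = \<phi> (k, w)" "\<phi> (p 0) = \<phi> (m, y)"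
    using ch inv' unfolding qd_chain_def mem_clsOf_tens by (metis eqr_sym)+
  then show "\<phi> (k, w) - \<phi> (m, y) \<le> c"
    using chain_potential_bound[OF inv' lip ch] c by simp
qed

lemma qd_chain_reverse:
  assumes "tripointed Y" and ch: "qd_chain Y u v n p q"
  shows "qd_chain Y v u n (\<lambda>i. q (n - 1 - i)) (\<lambda>i. p (n - 1 - i))"
    and "chain_len Y n (\<lambda>i. q (n - 1 - i)) (\<lambda>i. p (n - 1 - i)) = chain_len Y n p q"
proof -
  show "qd_chain Y v u n (\<lambda>i. q (n - 1 - i)) (\<lambda>i. p (n - 1 - i))"
    unfolding qd_chain_def
  proof (intro conjI allI impI)
    fix i
    assume i: "Suc i < n"
    then have "(q (n - 2 - i), p (Suc (n - 2 - i))) \<in> eqr Y"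
      using ch unfolding qd_chain_def by auto
    moreover have "Suc (n - 2 - i) = n - 1 - i" "n - 1 - Suc i = n - 2 - i"
      using i by auto
    ultimately show "(p (n - 1 - i), q (n - 1 - Suc i)) \<in> eqr Y"
      by (metis eqr_sym)
  qed (use ch in \<open>auto simp: qd_chain_def\<close>)
  have "chain_len Y n (\<lambda>i. q (n - 1 - i)) (\<lambda>i. p (n - 1 - i))
      = (\<Sum>i<n. dprod Y (p (n - Suc i)) (q (n - Suc i)))"
    using ch dprod_commute[OF assms(1)] unfolding qd_chain_def
    by (intro sum.cong) (auto simp: Suc_diff_Suc)
  also have "\<dots> = chain_len Y n p q"
    by (rule sum.nat_diff_reindex)
  finally show "chain_len Y n (\<lambda>i. q (n - 1 - i)) (\<lambda>i. p (n - 1 - i)) = chain_len Y n p q" .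
qed

lemma qd_chain_append:
  assumes c1: "qd_chain Y u v n1 p1 q1" and c2: "qd_chain Y v w n2 p2 q2"
    and link: "(q1 (n1 - 1), p2 0) \<in> eqr Y"
  defines "p \<equiv> \<lambda>i. if i < n1 then p1 i else p2 (i - n1)"
    and "q \<equiv> \<lambda>i. if i < n1 then q1 i else q2 (i - n1)"
  shows "qd_chain Y u w (n1 + n2) p q"
    and "chain_len Y (n1 + n2) p q = chain_len Y n1 p1 q1 + chain_len Y n2 p2 q2"
proof -
  show "qd_chain Y u w (n1 + n2) p q"
    unfolding qd_chain_def
  proof (intro conjI allI impI)
    have "n1 + n2 - 1 - n1 = n2 - 1" "\<not> n1 + n2 - 1 < n1"
      using c1 c2 by (auto simp: qd_chain_def)
    then show "q (n1 + n2 - 1) |\<in>| clsOf w"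
      using c2 by (simp add: q_def qd_chain_def)
  next
    fix i
    assume i: "Suc i < n1 + n2"
    consider "Suc i < n1" | "i = n1 - 1" "0 < n1" | "n1 \<le> i"
      by linarith
    then show "(q i, p (Suc i)) \<in> eqr Y"
    proof cases
      case 3
      then have "Suc (i - n1) < n2" "Suc i - n1 = Suc (i - n1)"
        using i by auto
      then show ?thesis
        using c2 3 unfolding p_def q_def qd_chain_def by auto
    qed (use c1 link in \<open>auto simp: p_def q_def qd_chain_def\<close>)
  qed (use c1 c2 in \<open>auto simp: p_def q_def qd_chain_def\<close>)
  have "(\<Sum>i<n1 + n2. f i) = (\<Sum>i<n1. f i) + (\<Sum>i<n2. f (n1 + i))" for f :: "nat \<Rightarrow> real"
    by (induction n2) (auto simp: add.assoc)
  then show "chain_len Y (n1 + n2) p q = chain_len Y n1 p1 q1 + chain_len Y n2 p2 q2"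
    by (simp add: p_def q_def)
qed

lemma qd_commute_le:
  assumes t: "tripointed Y" and u: "u \<in> car (tensor Y)" and v: "v \<in> car (tensor Y)"
  shows "qd Y u v \<le> qd Y v u"
  unfolding qd_Inf_chains[of Y v u]
proof (rule cInf_greatest)
  show "{chain_len Y k p q | k p q. qd_chain Y v u k p q} \<noteq> {}"
    using qd_chain_exists[OF v u] by blast
next
  fix c
  assume "c \<in> {chain_len Y k p q | k p q. qd_chain Y v u k p q}"
  then obtain n p q where ch: "qd_chain Y v u n p q" and c: "c = chain_len Y n p q"
    by blast
  show "qd Y u v \<le> c"
    using qd_le_chain_len[OF t qd_chain_reverse(1)[OF t ch]] qd_chain_reverse(2)[OF t ch] c by simp
qed

lemma qd_commute: "tripointed Y \<Longrightarrow> u \<in> car (tensor Y) \<Longrightarrow> v \<in> car (tensor Y) \<Longrightarrow> qd Y u v = qd Y v u"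
  by (simp add: antisym qd_commute_le)

lemma qd_triangle:
  assumes t: "tripointed Y" and u: "u \<in> car (tensor Y)" and v: "v \<in> car (tensor Y)"
    and w: "w \<in> car (tensor Y)"
  shows "qd Y u w \<le> qd Y u v + qd Y v w"
proof (rule field_le_epsilon)
  fix \<epsilon> :: real
  assume "0 < \<epsilon>"
  then have "qd Y u v < qd Y u v + \<epsilon> / 2" "qd Y v w < qd Y v w + \<epsilon> / 2"
    by simp_all
  obtain n1 p1 q1 where c1: "qd_chain Y u v n1 p1 q1" "chain_len Y n1 p1 q1 < qd Y u v + \<epsilon> / 2"
    by (rule qd_approx[OF t u v \<open>qd Y u v < qd Y u v + \<epsilon> / 2\<close>])
  obtain n2 p2 q2 where c2: "qd_chain Y v w n2 p2 q2" "chain_len Y n2 p2 q2 < qd Y v w + \<epsilon> / 2"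
    by (rule qd_approx[OF t v w \<open>qd Y v w < qd Y v w + \<epsilon> / 2\<close>])
  obtain m y where v': "v = tens Y m y"
    using v by (rule car_tensorE)
  have "((m, y), q1 (n1 - 1)) \<in> eqr Y" "((m, y), p2 0) \<in> eqr Y"
    using c1(1) c2(1) unfolding qd_chain_def v' mem_clsOf_tens by simp_all
  then have "(q1 (n1 - 1), p2 0) \<in> eqr Y"
    by (metis eqr_sym eqr_trans)
  note app = qd_chain_append[OF c1(1) c2(1) this]
  have "qd Y u w \<le> chain_len Y n1 p1 q1 + chain_len Y n2 p2 q2"
    using qd_le_chain_len[OF t app(1)] app(2) by simp
  then show "qd Y u w \<le> qd Y u v + qd Y v w + \<epsilon>"
    using c1(2) c2(2) by simp
qed

definition capped_potential :: "real \<Rightarrow> (mm \<Rightarrow> real) \<Rightarrow> (mm \<Rightarrow> 'v) \<Rightarrow> 'v tsp \<Rightarrow> mm \<times> 'v \<Rightarrow> real" where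
  "capped_potential B A C Y p = min B (A (fst p) + dst Y (snd p) (C (fst p)) / 2)"

lemma capped_potential_lipschitz:
  assumes t: "tripointed Y" and A: "\<And>k. 0 \<le> A k" and C: "\<And>k. C k \<in> car Y"
    and B: "0 \<le> B" "B \<le> 1" and p: "snd p \<in> car Y" and q: "snd q \<in> car Y"
  shows "capped_potential B A C Y q - capped_potential B A C Y p \<le> dprod Y p q"
proof (cases "fst p = fst q")
  case True
  then obtain m y1 y2 where e: "p = (m, y1)" "q = (m, y2)"
    by (cases p; cases q) auto
  have "dst Y y2 (C m) \<le> dst Y y1 y2 + dst Y y1 (C m)" "0 \<le> dst Y y1 y2"
    using p q C e tripointed_dst_triangle[OF t] tripointed_dst_commute[OF t] tripointed_dst_nonneg[OF t]
    by (metis fst_conv snd_conv)+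
  then show ?thesis
    using e by (auto simp: capped_potential_def min_def)
next
  case False
  have "0 \<le> dst Y (snd p) (C (fst p))"
    using tripointed_dst_nonneg[OF t p C] .
  then show ?thesis
    using False A[of "fst p"] B by (cases p; cases q) (auto simp: capped_potential_def min_def)
qed

text \<open>The potential is half the distance to \<open>y\<close> in copy \<open>m\<close> and, in another copy \<open>k\<close>, the cost of
  reaching copy \<open>m\<close> through the glued corners.\<close>
lemma qd_tens_ge:
  assumes t: "tripointed Y" and y: "y \<in> car Y" and w: "w \<in> car Y"
  shows "min (1/2) (if k = m then dst Y w y / 2
           else dst Y (corner (glue m k) Y) y / 2 + dst Y w (corner (glue k m) Y) / 2)
         \<le> qd Y (tens Y m y) (tens Y k w)"
proof -
  define A where "A k = (if k = m then 0 else dst Y (corner (glue m k) Y) y / 2)" for k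
  define C where "C k = (if k = m then y else corner (glue k m) Y)" for k
  let ?\<phi> = "capped_potential (1/2) A C Y"
  have A: "0 \<le> A k" for k
    using tripointed_dst_nonneg[OF t corner_in_car[OF t] y] by (simp add: A_def)
  have C: "C k \<in> car Y" for k
    using corner_in_car[OF t] y by (simp add: C_def)
  have "0 \<le> dst Y P y" "dst Y P y \<le> 1" if "P \<in> {pT Y, pL Y, pR Y}" for P
    using that t y tripointed_dst_nonneg tripointed_dst_le_1 by (auto simp: tripointed_def)
  then have inv: "?\<phi> p = ?\<phi> q" if "(p, q) \<in> gen Y" for p q
    using that dst_pts[OF t]
    by (elim genE; cases m) (auto simp: capped_potential_def A_def C_def min_def)
  have "?\<phi> (k, w) - ?\<phi> (m, y) \<le> qd Y (tens Y m y) (tens Y k w)"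
    using qd_ge_potential[OF inv capped_potential_lipschitz[OF t A C] y w] by simp
  moreover have "?\<phi> (m, y) = 0"
    using tripointed_dst_self[OF t y] by (simp add: capped_potential_def A_def C_def)
  ultimately show ?thesis
    by (cases "k = m") (simp_all add: capped_potential_def A_def C_def)
qed

lemma qd_same_copy:
  assumes t: "tripointed Y" and y: "y \<in> car Y" and w: "w \<in> car Y"
  shows "qd Y (tens Y m y) (tens Y m w) = dst Y y w / 2"
proof (rule antisym)
  show "qd Y (tens Y m y) (tens Y m w) \<le> dst Y y w / 2"
    using qd_tens_le_dprod[OF t y w, of m m] by simp
  have "dst Y w y = dst Y y w" "dst Y y w \<le> 1"
    using tripointed_dst_commute[OF t w y] tripointed_dst_le_1[OF t y w] by auto
  then show "dst Y y w / 2 \<le> qd Y (tens Y m y) (tens Y m w)"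
    using qd_tens_ge[OF t y w, of m m] by (simp add: min_def split: if_splits)
qed

lemma qd_other_copy_le:
  assumes t: "tripointed Y" and y: "y \<in> car Y" and w: "w \<in> car Y" and mk: "m \<noteq> k"
  shows "qd Y (tens Y m y) (tens Y k w)
           \<le> dst Y y (corner (glue m k) Y) / 2 + dst Y w (corner (glue k m) Y) / 2"
proof -
  let ?a = "corner (glue m k) Y" and ?b = "corner (glue k m) Y"
  have ch: "qd_chain Y (tens Y m y) (tens Y k w) 2
      (\<lambda>i. if i = 0 then (m, y) else (k, ?b)) (\<lambda>i. if i = 0 then (m, ?a) else (k, w))"
    using y w corner_in_car[OF t] glue_eqr[OF mk] by (auto simp: qd_chain_def)
  have "dst Y ?b w = dst Y w ?b"
    using tripointed_dst_commute[OF t corner_in_car[OF t] w] .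
  then show ?thesis
    using qd_le_chain_len[OF t ch] by (simp add: numeral_2_eq_2)
qed

lemma qd_other_copy_ge:
  assumes t: "tripointed Y" and y: "y \<in> car Y" and w: "w \<in> car Y" and mk: "m \<noteq> k"
  shows "min (1/2) (dst Y y (corner (glue m k) Y) / 2 + dst Y w (corner (glue k m) Y) / 2)
           \<le> qd Y (tens Y m y) (tens Y k w)"
  using qd_tens_ge[OF t y w, of k m] mk tripointed_dst_commute[OF t corner_in_car[OF t] y] by simp

lemma qd_other_copy_small:
  assumes t: "tripointed Y" and y: "y \<in> car Y" and w: "w \<in> car Y" and mk: "m \<noteq> k"
    and small: "qd Y (tens Y m y) (tens Y k w) < \<delta>" "\<delta> \<le> 1/4"
  shows "dst Y y (corner (glue m k) Y) < 2 * \<delta>" and "dst Y w (corner (glue k m) Y) < 2 * \<delta>"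
proof -
  have "0 \<le> dst Y y (corner (glue m k) Y)" "0 \<le> dst Y w (corner (glue k m) Y)"
    using tripointed_dst_nonneg[OF t] corner_in_car[OF t] y w by auto
  with qd_other_copy_ge[OF t y w mk] small
  show "dst Y y (corner (glue m k) Y) < 2 * \<delta>" "dst Y w (corner (glue k m) Y) < 2 * \<delta>"
    by (auto simp: min_def split: if_splits)
qed

lemma qd_corner_ge:
  assumes t: "tripointed Y" and w: "w \<in> car Y"
  shows "min 1 ((if k = mOf P then 0 else 1/2) + dst Y w (corner P Y) / 2)
           \<le> qd Y (tens Y (mOf P) (corner P Y)) (tens Y k w)"
proof -
  define A where "A k = (if k = mOf P then 0 else 1/2 :: real)" for k
  let ?\<phi> = "capped_potential 1 A (\<lambda>_. corner P Y) Y"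
  have A: "0 \<le> A k" for k
    by (simp add: A_def)
  have inv: "?\<phi> p = ?\<phi> q" if "(p, q) \<in> gen Y" for p q
    using that dst_pts[OF t]
    by (elim genE; cases P) (auto simp: capped_potential_def A_def min_def)
  have "?\<phi> (k, w) - ?\<phi> (mOf P, corner P Y) \<le> qd Y (tens Y (mOf P) (corner P Y)) (tens Y k w)"
    using qd_ge_potential[OF inv capped_potential_lipschitz[OF t A corner_in_car[OF t]]
        corner_in_car[OF t] w] by simp
  moreover have "?\<phi> (mOf P, corner P Y) = 0"
    using tripointed_dst_self[OF t corner_in_car[OF t]] by (simp add: capped_potential_def A_def)
  ultimately show ?thesis
    by (simp add: capped_potential_def A_def)
qed

lemma qd_le_1:
  assumes t: "tripointed Y" and u: "u \<in> car (tensor Y)" and v: "v \<in> car (tensor Y)"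
  shows "qd Y u v \<le> 1"
proof -
  obtain m y k w where uv: "u = tens Y m y" "y \<in> car Y" "v = tens Y k w" "w \<in> car Y"
    using u v by (elim car_tensorE) simp
  have "qd Y u v \<le> dprod Y (m, y) (k, w)"
    using qd_tens_le_dprod[OF t uv(2,4)] uv by simp
  also have "\<dots> \<le> 1"
    using dprod_le_1[OF t, of "(m, y)" "(k, w)"] uv by simp
  finally show ?thesis .
qed

lemma qd_nonneg: "tripointed Y \<Longrightarrow> u \<in> car (tensor Y) \<Longrightarrow> v \<in> car (tensor Y) \<Longrightarrow> 0 \<le> qd Y u v"
  unfolding qd_Inf_chains
  by (rule cInf_greatest) (use qd_chain_exists chain_len_nonneg in fastforce)+

lemma qd_self: "tripointed Y \<Longrightarrow> u \<in> car (tensor Y) \<Longrightarrow> qd Y u u = 0"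
  by (elim car_tensorE) (simp add: qd_same_copy tripointed_dst_self)

lemma qd_eq_0_imp_eq:
  assumes t: "tripointed Y" and u: "u \<in> car (tensor Y)" and v: "v \<in> car (tensor Y)"
    and d: "qd Y u v = 0"
  shows "u = v"
proof -
  obtain m y k w where u': "u = tens Y m y" "y \<in> car Y" and v': "v = tens Y k w" "w \<in> car Y"
    using u v by (elim car_tensorE) simp
  show ?thesis
  proof (cases "m = k")
    case True
    then have "dst Y y w / 2 = 0"
      using qd_same_copy[OF t u'(2) v'(2), of m] d u' v' by simp
    then show ?thesis
      using tripointed_dst_eq_0_iff[OF t u'(2) v'(2)] True u' v' by simp
  next
    case False
    let ?a = "corner (glue m k) Y" and ?b = "corner (glue k m) Y"
    have "0 \<le> dst Y y ?a" "0 \<le> dst Y w ?b"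
      using tripointed_dst_nonneg[OF t] corner_in_car[OF t] u'(2) v'(2) by auto
    then have "dst Y y ?a = 0" "dst Y w ?b = 0"
      using qd_other_copy_ge[OF t u'(2) v'(2) False] d u' v' by (auto simp: min_def split: if_splits)
    then have "y = ?a" "w = ?b"
      using tripointed_dst_eq_0_iff[OF t] corner_in_car[OF t] u'(2) v'(2) by auto
    then show ?thesis
      using tens_eqI[OF glue_eqr[OF False]] u' v' by simp
  qed
qed

lemma qd_eq_0_iff:
  "tripointed Y \<Longrightarrow> u \<in> car (tensor Y) \<Longrightarrow> v \<in> car (tensor Y) \<Longrightarrow> qd Y u v = 0 \<longleftrightarrow> u = v"
  using qd_eq_0_imp_eq qd_self by blast

lemma qd_corners:
  assumes t: "tripointed Y" and "P \<noteq> P'"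
  shows "qd Y (corner P (tensor Y)) (corner P' (tensor Y)) = 1"
proof (rule antisym)
  show "qd Y (corner P (tensor Y)) (corner P' (tensor Y)) \<le> 1"
    using qd_le_1[OF t tens_in_car_tensor[OF corner_in_car[OF t]] tens_in_car_tensor[OF corner_in_car[OF t]]]
    by (simp add: corner_tensor)
  have "mOf P' \<noteq> mOf P"
    using assms(2) by (cases P; cases P') simp_all
  then show "1 \<le> qd Y (corner P (tensor Y)) (corner P' (tensor Y))"
    using qd_corner_ge[OF t corner_in_car[OF t], of "mOf P'" P P'] dst_corners[OF t, of P' P] assms(2)
    by (simp add: corner_tensor)
qed

lemma tripointed_tensor:
  assumes t: "tripointed Y"
  shows "tripointed (tensor Y)"
proof -
  have c: "corner P (tensor Y) \<in> car (tensor Y)" for P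
    unfolding corner_tensor by (rule tens_in_car_tensor[OF corner_in_car[OF t]])
  have d: "qd Y (corner P (tensor Y)) (corner P' (tensor Y)) = 1" if "P \<noteq> P'" for P P'
    using qd_corners[OF t that] .
  have ne: "corner P (tensor Y) \<noteq> corner P' (tensor Y)" if "P \<noteq> P'" for P P'
    using d[OF that] qd_self[OF t c[of P]] by (metis zero_neq_one)
  have m: "\<forall>x\<in>car (tensor Y). \<forall>y\<in>car (tensor Y). 0 \<le> qd Y x y \<and> qd Y x y \<le> 1 \<and>
      (qd Y x y = 0 \<longleftrightarrow> x = y) \<and> qd Y x y = qd Y y x"
    by (simp add: qd_nonneg[OF t] qd_le_1[OF t] qd_eq_0_iff[OF t] qd_commute[OF t])
  have tr: "\<forall>x\<in>car (tensor Y). \<forall>y\<in>car (tensor Y). \<forall>w\<in>car (tensor Y). qd Y x w \<le> qd Y x y + qd Y y w"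
    using qd_triangle[OF t] by blast
  show ?thesis
    unfolding tripointed_def dst_tensor
    using c[of PT] c[of PL] c[of PR] ne[of PT PL] ne[of PL PR] ne[of PT PR]
      d[of PT PL] d[of PL PR] d[of PT PR] m tr
    by simp
qed

section \<open>The functor on maps\<close>

definition Mlift :: "'b tm tsp \<Rightarrow> ('a tm \<Rightarrow> 'b tm) \<Rightarrow> 'a tm \<Rightarrow> 'b tm" where
  "Mlift Y' h u = (let p = SOME p. p |\<in>| clsOf u in tens Y' (fst p) (h (snd p)))"

lemma Mmap_Suc_Mlift: "Mmap Y' (Suc k) h = Mlift (Fpow Y' k) (Mmap Y' k h)"
  by (rule ext) (simp add: Mlift_def)

definition preserves_corners :: "('v, 'z) tsp_scheme \<Rightarrow> ('w, 'y) tsp_scheme \<Rightarrow> ('v \<Rightarrow> 'w) \<Rightarrow> bool" where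
  "preserves_corners Y Y' h \<longleftrightarrow> (\<forall>P. h (corner P Y) = corner P Y')"

lemma preserves_corners_iff:
  "preserves_corners Y Y' h \<longleftrightarrow> h (pT Y) = pT Y' \<and> h (pL Y) = pL Y' \<and> h (pR Y) = pR Y'"
  unfolding preserves_corners_def by (metis corner.simps pt.exhaust)

lemma preserves_corners_eqr:
  assumes "preserves_corners Y Y' h" and "(p, q) \<in> eqr Y"
  shows "((fst p, h (snd p)), (fst q, h (snd q))) \<in> eqr Y'"
proof -
  have "((fst a, h (snd a)), (fst b, h (snd b))) \<in> gen Y'" if "(a, b) \<in> gen Y" for a b
    using that assms(1) by (auto simp: gen_def preserves_corners_iff)
  from eqr_image[of Y "\<lambda>p. (fst p, h (snd p))" Y', OF this assms(2)] show ?thesis .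
qed

lemma Mlift_tens:
  assumes "preserves_corners Y Y' h"
  shows "Mlift Y' h (tens Y m y) = tens Y' m (h y)"
proof -
  define p where "p = (SOME p. p |\<in>| clsOf (tens Y m y))"
  have "p |\<in>| clsOf (tens Y m y)"
    unfolding p_def by (rule someI[of _ "(m, y)"]) simp
  then have "((m, h y), (fst p, h (snd p))) \<in> eqr Y'"
    using preserves_corners_eqr[OF assms] by (force simp: mem_clsOf_tens)
  then show ?thesis
    unfolding Mlift_def p_def[symmetric] by (simp add: tens_eqI)
qed

lemma Mlift_in_car:
  assumes "preserves_corners Y Y' h" "h ` car Y \<subseteq> car Y'" "u \<in> car (tensor Y)"
  shows "Mlift Y' h u \<in> car (tensor Y')"
  using assms(3)
proof (rule car_tensorE)
  fix m y
  assume u: "u = tens Y m y" and y: "y \<in> car Y"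
  then have "h y \<in> car Y'"
    using assms(2) by blast
  then show ?thesis
    using Mlift_tens[OF assms(1)] tens_in_car_tensor u by simp
qed

lemma preserves_corners_Mlift:
  "preserves_corners Y Y' h \<Longrightarrow> preserves_corners (tensor Y) (tensor Y') (Mlift Y' h)"
  by (simp add: preserves_corners_def corner_tensor Mlift_tens)

definition isometric_embedding :: "'v tsp \<Rightarrow> 'w tsp \<Rightarrow> ('v \<Rightarrow> 'w) \<Rightarrow> bool" where
  "isometric_embedding Y Y' h \<longleftrightarrow> h ` car Y \<subseteq> car Y' \<and> preserves_corners Y Y' h \<and>
     (\<forall>a\<in>car Y. \<forall>b\<in>car Y. dst Y' (h a) (h b) = dst Y a b)"

lemma qd_Mlift_le:
  fixes Y :: "'a tm tsp" and Y' :: "'b tm tsp"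
  assumes t': "tripointed Y'" and pc: "preserves_corners Y Y' h" and hc: "h ` car Y \<subseteq> car Y'"
    and hd: "\<And>a b. a \<in> car Y \<Longrightarrow> b \<in> car Y \<Longrightarrow> dst Y' (h a) (h b) \<le> dst Y a b"
    and y: "y \<in> car Y" and w: "w \<in> car Y"
  shows "qd Y' (tens Y' m (h y)) (tens Y' k (h w)) \<le> qd Y (tens Y m y) (tens Y k w)"
  unfolding qd_Inf_chains[of Y]
proof (rule cInf_greatest)
  show "{chain_len Y n p q | n p q. qd_chain Y (tens Y m y) (tens Y k w) n p q} \<noteq> {}"
    using qd_chain_single[OF y w] by blast
next
  fix c
  assume "c \<in> {chain_len Y n p q | n p q. qd_chain Y (tens Y m y) (tens Y k w) n p q}"
  then obtain n p q where ch: "qd_chain Y (tens Y m y) (tens Y k w) n p q" and c: "c = chain_len Y n p q"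
    by blast
  define f where "f p = (fst p, h (snd p))" for p :: "mm \<times> 'a tm"
  have "qd_chain Y' (tens Y' m (h y)) (tens Y' k (h w)) n (f \<circ> p) (f \<circ> q)"
    using ch hc preserves_corners_eqr[OF pc]
    by (fastforce simp: qd_chain_def f_def mem_clsOf_tens)
  then have "qd Y' (tens Y' m (h y)) (tens Y' k (h w)) \<le> chain_len Y' n (f \<circ> p) (f \<circ> q)"
    by (rule qd_le_chain_len[OF t'])
  also have "\<dots> \<le> chain_len Y n p q"
  proof (rule sum_mono)
    fix i
    assume "i \<in> {..<n}"
    then have "snd (p i) \<in> car Y" "snd (q i) \<in> car Y"
      using ch by (auto simp: qd_chain_def)
    then show "dprod Y' ((f \<circ> p) i) ((f \<circ> q) i) \<le> dprod Y (p i) (q i)"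
      using hd by (cases "p i"; cases "q i") (auto simp: f_def)
  qed
  finally show "qd Y' (tens Y' m (h y)) (tens Y' k (h w)) \<le> c"
    using c by simp
qed

text \<open>The distance from \<open>u\<close>, transported along \<open>h\<close> and extended to all of \<open>M \<times> Y'\<close> as an infimal
  convolution; as a potential it shows that \<open>M \<otimes> h\<close> does not shrink distances.\<close>
definition transported_dist :: "'a tm tsp \<Rightarrow> 'b tm tsp \<Rightarrow> ('a tm \<Rightarrow> 'b tm) \<Rightarrow> 'a tm \<Rightarrow> mm \<times> 'b tm \<Rightarrow> real" where
  "transported_dist Y Y' h u p =
     min 1 (INF v\<in>car Y. qd Y u (tens Y (fst p) v) + dst Y' (h v) (snd p) / 2)"

context
  fixes Y :: "'a tm tsp" and Y' :: "'b tm tsp" and h u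
  assumes t: "tripointed Y" and t': "tripointed Y'" and iso: "isometric_embedding Y Y' h"
    and u: "u \<in> car (tensor Y)"
begin

private lemma image_in_car: "a \<in> car Y \<Longrightarrow> h a \<in> car Y'"
  using iso by (auto simp: isometric_embedding_def)

private lemma dst_image: "a \<in> car Y \<Longrightarrow> b \<in> car Y \<Longrightarrow> dst Y' (h a) (h b) = dst Y a b"
  using iso by (auto simp: isometric_embedding_def)

private lemma car_nonempty: "car Y \<noteq> {}"
  using corner_in_car[OF t] by blast

private lemma bdd_below_transport: "b \<in> car Y' \<Longrightarrow> bdd_below ((\<lambda>v. qd Y u (tens Y k v) + dst Y' (h v) b / 2) ` car Y)"
  by (rule bdd_belowI2[where m = 0])
    (simp add: add_nonneg_nonneg qd_nonneg[OF t u tens_in_car_tensor] tripointed_dst_nonneg[OF t' image_in_car])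

lemma transported_dist_image:
  assumes w: "w \<in> car Y"
  shows "transported_dist Y Y' h u (k, h w) = qd Y u (tens Y k w)"
proof -
  have "(INF v\<in>car Y. qd Y u (tens Y k v) + dst Y' (h v) (h w) / 2) = qd Y u (tens Y k w)"
  proof (rule antisym)
    show "(INF v\<in>car Y. qd Y u (tens Y k v) + dst Y' (h v) (h w) / 2) \<le> qd Y u (tens Y k w)"
      using cINF_lower[OF bdd_below_transport[OF image_in_car[OF w]] w] tripointed_dst_self[OF t' image_in_car[OF w]] by simp
    show "qd Y u (tens Y k w) \<le> (INF v\<in>car Y. qd Y u (tens Y k v) + dst Y' (h v) (h w) / 2)"
    proof (rule cINF_greatest[OF car_nonempty])
      fix v
      assume v: "v \<in> car Y"
      have "qd Y u (tens Y k w) \<le> qd Y u (tens Y k v) + qd Y (tens Y k v) (tens Y k w)"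
        using qd_triangle[OF t u] tens_in_car_tensor v w by blast
      then show "qd Y u (tens Y k w) \<le> qd Y u (tens Y k v) + dst Y' (h v) (h w) / 2"
        using qd_same_copy[OF t v w] dst_image[OF v w] by simp
    qed
  qed
  then show ?thesis
    using qd_le_1[OF t u tens_in_car_tensor[OF w]] by (simp add: transported_dist_def)
qed

lemma transported_dist_gen_invariant:
  assumes "(p, q) \<in> gen Y'"
  shows "transported_dist Y Y' h u p = transported_dist Y Y' h u q"
proof -
  have corners: "h (pT Y) = pT Y'" "h (pL Y) = pL Y'" "h (pR Y) = pR Y'"
    using iso by (simp_all add: isometric_embedding_def preserves_corners_iff)
  have glued: "tens Y Mb (pT Y) = tens Y Ma (pL Y)" "tens Y Ma (pR Y) = tens Y Mc (pT Y)"
      "tens Y Mc (pL Y) = tens Y Mb (pR Y)"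
    by (simp_all add: tens_eqI gen_in_eqr gen_def)
  have "transported_dist Y Y' h u (k, pT Y') = qd Y u (tens Y k (pT Y))"
      "transported_dist Y Y' h u (k, pL Y') = qd Y u (tens Y k (pL Y))"
      "transported_dist Y Y' h u (k, pR Y') = qd Y u (tens Y k (pR Y))" for k
    using transported_dist_image[of "pT Y"] transported_dist_image[of "pL Y"]
      transported_dist_image[of "pR Y"] corners t by (simp_all add: tripointed_def)
  with assms glued show ?thesis
    by (elim genE) simp_all
qed

lemma transported_dist_lipschitz:
  assumes p: "snd p \<in> car Y'" and q: "snd q \<in> car Y'"
  shows "transported_dist Y Y' h u q - transported_dist Y Y' h u p \<le> dprod Y' p q"
proof (cases "fst p = fst q")
  case True
  then obtain k a b where e: "p = (k, a)" "q = (k, b)"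
    by (cases p; cases q) auto
  have a: "a \<in> car Y'" and b: "b \<in> car Y'"
    using p q e by auto
  have "(INF v\<in>car Y. qd Y u (tens Y k v) + dst Y' (h v) b / 2) - dst Y' a b / 2
      \<le> (INF v\<in>car Y. qd Y u (tens Y k v) + dst Y' (h v) a / 2)"
  proof (rule cINF_greatest[OF car_nonempty])
    fix v
    assume v: "v \<in> car Y"
    have "(INF v\<in>car Y. qd Y u (tens Y k v) + dst Y' (h v) b / 2) \<le> qd Y u (tens Y k v) + dst Y' (h v) b / 2"
      by (rule cINF_lower[OF bdd_below_transport[OF b] v])
    moreover have "dst Y' (h v) b \<le> dst Y' (h v) a + dst Y' a b"
      using tripointed_dst_triangle[OF t' image_in_car[OF v] a b] .
    ultimately show "(INF v\<in>car Y. qd Y u (tens Y k v) + dst Y' (h v) b / 2) - dst Y' a b / 2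
        \<le> qd Y u (tens Y k v) + dst Y' (h v) a / 2"
      by simp
  qed
  moreover have "0 \<le> dst Y' a b"
    using tripointed_dst_nonneg[OF t' a b] .
  ultimately show ?thesis
    using e by (simp add: transported_dist_def min_def)
next
  case False
  have "0 \<le> (INF v\<in>car Y. qd Y u (tens Y (fst p) v) + dst Y' (h v) (snd p) / 2)"
    by (rule cINF_greatest[OF car_nonempty])
      (simp add: add_nonneg_nonneg qd_nonneg[OF t u tens_in_car_tensor] tripointed_dst_nonneg[OF t' image_in_car p])
  then show ?thesis
    using False by (cases p; cases q) (auto simp: transported_dist_def)
qed

end

lemma qd_Mlift_ge:
  assumes t: "tripointed Y" and t': "tripointed Y'" and iso: "isometric_embedding Y Y' h"
    and y: "y \<in> car Y" and w: "w \<in> car Y"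
  shows "qd Y (tens Y m y) (tens Y k w) \<le> qd Y' (tens Y' m (h y)) (tens Y' k (h w))"
proof -
  let ?u = "tens Y m y"
  have u: "?u \<in> car (tensor Y)"
    using tens_in_car_tensor[OF y] .
  have hc: "h y \<in> car Y'" "h w \<in> car Y'"
    using iso y w by (auto simp: isometric_embedding_def)
  have "transported_dist Y Y' h ?u (k, h w) - transported_dist Y Y' h ?u (m, h y)
      \<le> qd Y' (tens Y' m (h y)) (tens Y' k (h w))"
    by (rule qd_ge_potential[OF transported_dist_gen_invariant[OF t t' iso u]
          transported_dist_lipschitz[OF t t' iso u] hc])
  moreover have "qd Y ?u ?u = 0"
    using qd_eq_0_iff[OF t u u] by simp
  ultimately show ?thesis
    using transported_dist_image[OF t t' iso u] y w by simp
qed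

lemma isometric_embedding_Mlift:
  assumes t: "tripointed Y" and t': "tripointed Y'" and iso: "isometric_embedding Y Y' h"
  shows "isometric_embedding (tensor Y) (tensor Y') (Mlift Y' h)"
proof -
  have pc: "preserves_corners Y Y' h" and hc: "h ` car Y \<subseteq> car Y'"
    and hd: "\<And>a b. a \<in> car Y \<Longrightarrow> b \<in> car Y \<Longrightarrow> dst Y' (h a) (h b) = dst Y a b"
    using iso by (auto simp: isometric_embedding_def)
  have "qd Y' (Mlift Y' h a) (Mlift Y' h b) = qd Y a b"
    if "a \<in> car (tensor Y)" "b \<in> car (tensor Y)" for a b
    using that
  proof (elim car_tensorE)
    fix m y k w
    assume "a = tens Y m y" "y \<in> car Y" "b = tens Y k w" "w \<in> car Y"
    then show ?thesis
      using qd_Mlift_le[OF t' pc hc] qd_Mlift_ge[OF t t' iso] hd Mlift_tens[OF pc]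
      by (simp add: antisym)
  qed
  then show ?thesis
    using Mlift_in_car[OF pc hc] preserves_corners_Mlift[OF pc]
    by (auto simp: isometric_embedding_def dst_tensor)
qed

lemma UNIV_pt: "(UNIV :: pt set) = {PT, PL, PR}"
proof -
  have "P \<in> {PT, PL, PR}" for P
    by (cases P) simp_all
  then show ?thesis
    by blast
qed

lemma cont_sp_uniform_on_finite:
  assumes hcont: "cont_sp Y Y' h" and A: "finite A" "A \<subseteq> car Y" and \<epsilon>: "0 < \<epsilon>"
  shows "\<exists>\<delta>>0. \<forall>a\<in>A. \<forall>v\<in>car Y. dst Y a v < \<delta> \<longrightarrow> dst Y' (h a) (h v) < \<epsilon>"
proof -
  have "\<forall>a\<in>A. \<exists>d. 0 < d \<and> (\<forall>v\<in>car Y. dst Y a v < d \<longrightarrow> dst Y' (h a) (h v) < \<epsilon>)"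
    using hcont A(2) \<epsilon> unfolding cont_sp_def by blast
  then obtain d where d: "\<forall>a\<in>A. 0 < d a \<and> (\<forall>v\<in>car Y. dst Y a v < d a \<longrightarrow> dst Y' (h a) (h v) < \<epsilon>)"
    by (auto dest!: bchoice)
  define \<delta> where "\<delta> = Min (insert 1 (d ` A))"
  have "0 < \<delta>"
    using d A(1) by (auto simp: \<delta>_def Min_gr_iff)
  moreover have "\<delta> \<le> d a" if "a \<in> A" for a
    using A(1) that by (simp add: \<delta>_def)
  ultimately show ?thesis
    using d by (meson order_less_le_trans)
qed

text \<open>Points at distance \<open>< \<delta> \<le> 1/4\<close> lie in one copy or near a pair of glued corners, so control
  of \<open>h\<close> near \<open>y\<close> and near the corners suffices.\<close>
lemma qd_tens_image_less:
  assumes t: "tripointed Y" and t': "tripointed Y'" and pc: "preserves_corners Y Y' h"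
    and y: "y \<in> car Y" and w: "w \<in> car Y" and hyw: "h y \<in> car Y'" "h w \<in> car Y'"
    and near: "\<And>a v. a \<in> insert y (range (\<lambda>P. corner P Y)) \<Longrightarrow> v \<in> car Y \<Longrightarrow>
      dst Y a v < \<eta> \<Longrightarrow> dst Y' (h a) (h v) < \<epsilon>"
    and small: "qd Y (tens Y m y) (tens Y k w) < \<delta>" "\<delta> \<le> 1/4" "2 * \<delta> \<le> \<eta>"
  shows "qd Y' (tens Y' m (h y)) (tens Y' k (h w)) < \<epsilon>"
proof (cases "m = k")
  case True
  then have "dst Y y w < \<eta>"
    using small qd_same_copy[OF t y w] by simp
  then have "dst Y' (h y) (h w) < \<epsilon>"
    using near[of y w] w by simp
  then show ?thesis
    using True qd_same_copy[OF t' hyw, of k] tripointed_dst_nonneg[OF t' hyw] by simp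
next
  case False
  let ?a = "glue m k" and ?b = "glue k m"
  have "dst Y (corner ?a Y) y < \<eta>" "dst Y (corner ?b Y) w < \<eta>"
    using qd_other_copy_small[OF t y w False small(1,2)] small(3)
      tripointed_dst_commute[OF t corner_in_car[OF t, of ?a] y]
      tripointed_dst_commute[OF t corner_in_car[OF t, of ?b] w] by simp_all
  then have "dst Y' (h (corner ?a Y)) (h y) < \<epsilon>" "dst Y' (h (corner ?b Y)) (h w) < \<epsilon>"
    using near[of "corner ?a Y" y] near[of "corner ?b Y" w] y w by simp_all
  moreover have "h (corner ?a Y) = corner ?a Y'" "h (corner ?b Y) = corner ?b Y'"
    using pc by (simp_all add: preserves_corners_def)
  ultimately have "dst Y' (h y) (corner ?a Y') < \<epsilon>" "dst Y' (h w) (corner ?b Y') < \<epsilon>"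
    using tripointed_dst_commute[OF t' corner_in_car[OF t'] hyw(1)]
      tripointed_dst_commute[OF t' corner_in_car[OF t'] hyw(2)] by simp_all
  then show ?thesis
    using qd_other_copy_le[OF t' hyw False] by simp
qed

lemma cont_sp_Mlift:
  assumes t: "tripointed Y" and t': "tripointed Y'" and pc: "preserves_corners Y Y' h"
    and hc: "h ` car Y \<subseteq> car Y'" and hcont: "cont_sp Y Y' h"
  shows "cont_sp (tensor Y) (tensor Y') (Mlift Y' h)"
  unfolding cont_sp_def dst_tensor
proof (intro ballI allI impI)
  fix u and \<epsilon> :: real
  assume u: "u \<in> car (tensor Y)" and \<epsilon>: "0 < \<epsilon>"
  obtain m y where u': "u = tens Y m y" "y \<in> car Y"
    using u by (rule car_tensorE)
  have fin: "finite (insert y (range (\<lambda>P. corner P Y)))"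
    by (simp add: UNIV_pt)
  have sub: "insert y (range (\<lambda>P. corner P Y)) \<subseteq> car Y"
    using u'(2) corner_in_car[OF t] by auto
  obtain \<eta> where "0 < \<eta>"
    and near: "\<forall>a\<in>insert y (range (\<lambda>P. corner P Y)). \<forall>v\<in>car Y. dst Y a v < \<eta> \<longrightarrow> dst Y' (h a) (h v) < \<epsilon>"
    using cont_sp_uniform_on_finite[OF hcont fin sub \<epsilon>] by blast
  define \<delta> where "\<delta> = min (1/4) (\<eta> / 2)"
  have "qd Y' (Mlift Y' h u) (Mlift Y' h v) < \<epsilon>" if v: "v \<in> car (tensor Y)" and uv: "qd Y u v < \<delta>" for v
  proof -
    obtain k w where v': "v = tens Y k w" "w \<in> car Y"
      using v by (rule car_tensorE)
    have hyw: "h y \<in> car Y'" "h w \<in> car Y'"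
      using hc u'(2) v'(2) by auto
    have small: "qd Y (tens Y m y) (tens Y k w) < \<delta>" "\<delta> \<le> 1/4" "2 * \<delta> \<le> \<eta>"
      using uv u' v' by (simp_all add: \<delta>_def)
    have "qd Y' (tens Y' m (h y)) (tens Y' k (h w)) < \<epsilon>"
      using qd_tens_image_less[OF t t' pc u'(2) v'(2) hyw _ small] near by blast
    then show ?thesis
      using Mlift_tens[OF pc] u' v' by simp
  qed
  moreover have "0 < \<delta>"
    using \<open>0 < \<eta>\<close> by (simp add: \<delta>_def)
  ultimately show "\<exists>\<delta>>0. \<forall>v\<in>car (tensor Y). qd Y u v < \<delta> \<longrightarrow> qd Y' (Mlift Y' h u) (Mlift Y' h v) < \<epsilon>"
    by blast
qed

lemma Fpow_0 [simp]: "Fpow Y 0 = Y"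
  by (simp add: Fpow_def)

lemma Fpow_Suc: "Fpow Y (Suc n) = tensor (Fpow Y n)"
  by (simp add: Fpow_def)

lemma Fpow_tensor: "Fpow (tensor Y) n = Fpow Y (Suc n)"
  by (simp add: Fpow_def funpow_swap1)

lemma tripointed_Fpow: "tripointed Y \<Longrightarrow> tripointed (Fpow Y n)"
  by (induction n) (simp_all add: Fpow_Suc tripointed_tensor)

section \<open>The chain \<open>I \<rightarrow> F I \<rightarrow> F\<^sup>2 I \<rightarrow> \<dots>\<close> and its union \<open>G\<close>\<close>

lemma car_embX: "car (embX X) = Base ` car X"
  by (simp add: embX_def)

lemma dst_embX [simp]: "dst (embX X) (Base a) (Base b) = dst X a b"
  by (simp add: embX_def)

lemma corner_embX: "corner P (embX X) = Base (corner P X)"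
  by (cases P) (simp_all add: embX_def)

lemma tripointed_embX: "tripointed X \<Longrightarrow> tripointed (embX X)"
  unfolding tripointed_def embX_def by auto

lemma tripointed_embI: "tripointed embI"
  unfolding embI_def by (rule tripointed_embX) (auto simp: tripointed_def Ipt_def)

lemma car_embI: "car embI = range Base"
  by (simp add: embI_def car_embX Ipt_def)

lemma corner_embI: "corner P embI = Base P"
  by (cases P) (simp_all add: embI_def embX_def Ipt_def)

abbreviation FI :: "nat \<Rightarrow> pt tm tsp" where
  "FI n \<equiv> Fpow embI n"

lemma tripointed_FI: "tripointed (FI n)"
  by (rule tripointed_Fpow[OF tripointed_embI])

lemma isometric_embedding_id: "isometric_embedding Y Y (\<lambda>x. x)"
  by (simp add: isometric_embedding_def preserves_corners_def)

lemma isometric_embedding_comp: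
  "isometric_embedding Y Y' f \<Longrightarrow> isometric_embedding Y' Y'' g \<Longrightarrow> isometric_embedding Y Y'' (g \<circ> f)"
  by (auto simp: isometric_embedding_def preserves_corners_def image_subset_iff)

lemma bang_Base: "bang (Base P) = corner P (tensor embI)"
  by (simp add: bang_def liftB_def corner_tensor corner_embI)

lemma isometric_embedding_bang: "isometric_embedding embI (tensor embI) bang"
proof -
  have t: "tripointed (tensor embI)"
    by (rule tripointed_tensor[OF tripointed_embI])
  have "dst embI (Base P) (Base P') = (if P = P' then 0 else 1)" for P P'
    by (simp add: embI_def Ipt_def)
  then show ?thesis
    using corner_in_car[OF t] dst_corners[OF t]
    by (auto simp: isometric_embedding_def preserves_corners_def car_embI bang_Base corner_embI)
qed

lemma emb_0: "emb 0 = bang"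
  by (rule ext) (simp add: emb_def)

lemma emb_Suc: "emb (Suc k) = Mlift (FI (Suc k)) (emb k)"
  unfolding emb_def Mmap_Suc_Mlift Fpow_tensor ..

lemma isometric_embedding_emb: "isometric_embedding (FI k) (FI (Suc k)) (emb k)"
proof (induction k)
  case 0
  then show ?case
    using isometric_embedding_bang by (simp add: emb_0 Fpow_Suc)
next
  case (Suc k)
  have "isometric_embedding (tensor (FI k)) (tensor (FI (Suc k))) (Mlift (FI (Suc k)) (emb k))"
    by (rule isometric_embedding_Mlift[OF tripointed_FI tripointed_FI Suc.IH])
  then show ?case
    by (simp only: emb_Suc Fpow_Suc)
qed

lemma isometric_embedding_embUp: "isometric_embedding (FI n) (FI (n + j)) (embUp n j)"
proof (induction j)
  case 0
  have "embUp n 0 = (\<lambda>x. x)"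
    by (rule ext) simp
  then show ?case
    by (simp add: isometric_embedding_id)
next
  case (Suc j)
  have "embUp n (Suc j) = emb (n + j) \<circ> embUp n j"
    by (rule ext) simp
  then show ?case
    unfolding add_Suc_right by (simp only: isometric_embedding_comp[OF Suc isometric_embedding_emb])
qed

lemma embUp_add: "embUp n (i + j) g = embUp (n + i) j (embUp n i g)"
  by (induction j) (simp_all add: add.assoc)

definition lift_to :: "nat \<Rightarrow> nat \<times> pt tm \<Rightarrow> pt tm" where
  "lift_to N x = embUp (fst x) (N - fst x) (snd x)"

lemma lift_to_in_car: "x \<in> Gcar \<Longrightarrow> fst x \<le> N \<Longrightarrow> lift_to N x \<in> car (FI N)"
  using isometric_embedding_embUp[of "fst x" "N - fst x"]
  by (auto simp: isometric_embedding_def lift_to_def Gcar_def)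

lemma dG_eq_lift_to_max:
  "dG x y = dst (FI (max (fst x) (fst y))) (lift_to (max (fst x) (fst y)) x) (lift_to (max (fst x) (fst y)) y)"
  by (cases x; cases y) (simp add: lift_to_def)

lemma dG_eq_lift_to:
  assumes x: "x \<in> Gcar" and y: "y \<in> Gcar" and N: "max (fst x) (fst y) \<le> N"
  shows "dG x y = dst (FI N) (lift_to N x) (lift_to N y)"
proof -
  define M where "M = max (fst x) (fst y)"
  have MN: "M + (N - M) = N"
    using N by (simp add: M_def)
  have lift: "lift_to N z = embUp M (N - M) (lift_to M z)" if "fst z \<le> M" for z
    using embUp_add[of "fst z" "M - fst z" "N - M" "snd z"] that MN by (simp add: lift_to_def)
  have c: "lift_to M x \<in> car (FI M)" "lift_to M y \<in> car (FI M)"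
    using lift_to_in_car x y by (simp_all add: M_def)
  have "dG x y = dst (FI M) (lift_to M x) (lift_to M y)"
    unfolding dG_eq_lift_to_max M_def ..
  also have "\<dots> = dst (FI (M + (N - M))) (embUp M (N - M) (lift_to M x)) (embUp M (N - M) (lift_to M y))"
    using isometric_embedding_embUp[of M "N - M"] c by (simp add: isometric_embedding_def)
  also have "\<dots> = dst (FI N) (lift_to N x) (lift_to N y)"
    using lift[of x] lift[of y] MN by (simp add: M_def)
  finally show ?thesis .
qed

lemma dG_nonneg: "x \<in> Gcar \<Longrightarrow> y \<in> Gcar \<Longrightarrow> 0 \<le> dG x y"
  unfolding dG_eq_lift_to_max by (intro tripointed_dst_nonneg[OF tripointed_FI] lift_to_in_car) simp_all

lemma dG_commute:
  assumes x: "x \<in> Gcar" and y: "y \<in> Gcar"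
  shows "dG x y = dG y x"
proof -
  have "max (fst y) (fst x) = max (fst x) (fst y)"
    by (rule max.commute)
  then show ?thesis
    unfolding dG_eq_lift_to_max
    using tripointed_dst_commute[OF tripointed_FI lift_to_in_car[OF x] lift_to_in_car[OF y]] by simp
qed

lemma dG_self: "x \<in> Gcar \<Longrightarrow> dG x x = 0"
  unfolding dG_eq_lift_to_max by (simp add: tripointed_dst_self[OF tripointed_FI] lift_to_in_car)

lemma dG_triangle:
  assumes x: "x \<in> Gcar" and y: "y \<in> Gcar" and w: "w \<in> Gcar"
  shows "dG x w \<le> dG x y + dG y w"
proof -
  define N where "N = max (fst x) (max (fst y) (fst w))"
  have "lift_to N x \<in> car (FI N)" "lift_to N y \<in> car (FI N)" "lift_to N w \<in> car (FI N)"
    using lift_to_in_car x y w by (auto simp: N_def)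
  moreover have "dG x w = dst (FI N) (lift_to N x) (lift_to N w)"
    by (rule dG_eq_lift_to[OF x w]) (simp add: N_def)
  moreover have "dG x y = dst (FI N) (lift_to N x) (lift_to N y)"
    by (rule dG_eq_lift_to[OF x y]) (simp add: N_def)
  moreover have "dG y w = dst (FI N) (lift_to N y) (lift_to N w)"
    by (rule dG_eq_lift_to[OF y w]) (simp add: N_def)
  ultimately show ?thesis
    using tripointed_dst_triangle[OF tripointed_FI] by simp
qed

section \<open>The completion \<open>S\<close>\<close>

lemma cauchyG_Gcar: "cauchyG \<sigma> \<Longrightarrow> \<sigma> n \<in> Gcar"
  by (simp add: cauchyG_def)

lemma cauchyG_const: "g \<in> Gcar \<Longrightarrow> cauchyG (\<lambda>_. g)"
  unfolding cauchyG_def using dG_self by simp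

lemma classS_in_Scar: "cauchyG \<sigma> \<Longrightarrow> classS \<sigma> \<in> Scar"
  by (simp add: Scar_def)

lemma dG_diff_le:
  assumes "a \<in> Gcar" "b \<in> Gcar" "c \<in> Gcar" "d \<in> Gcar"
  shows "\<bar>dG a b - dG c d\<bar> \<le> dG a c + dG b d"
  using dG_triangle[of a c b] dG_triangle[of c d b] dG_triangle[of c a d] dG_triangle[of a b d]
    dG_commute[of a c] dG_commute[of b d] assms
  by (simp add: abs_le_iff)

lemma convergent_dG_cauchyG:
  assumes s: "cauchyG \<sigma>" and t: "cauchyG \<tau>"
  shows "convergent (\<lambda>n. dG (\<sigma> n) (\<tau> n))"
proof -
  have "Cauchy (\<lambda>n. dG (\<sigma> n) (\<tau> n))"
  proof (rule CauchyI)
    fix e :: real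
    assume "0 < e"
    then obtain M1 M2 where M1: "\<forall>m\<ge>M1. \<forall>n\<ge>M1. dG (\<sigma> m) (\<sigma> n) < e / 2"
      and M2: "\<forall>m\<ge>M2. \<forall>n\<ge>M2. dG (\<tau> m) (\<tau> n) < e / 2"
      using s t unfolding cauchyG_def by (meson half_gt_zero)
    have "norm (dG (\<sigma> m) (\<tau> m) - dG (\<sigma> n) (\<tau> n)) < e" if "max M1 M2 \<le> m" "max M1 M2 \<le> n" for m n
      using that M1 M2 dG_diff_le[of "\<sigma> m" "\<tau> m" "\<sigma> n" "\<tau> n"] cauchyG_Gcar[OF s] cauchyG_Gcar[OF t]
      by fastforce
    then show "\<exists>M. \<forall>m\<ge>M. \<forall>n\<ge>M. norm (dG (\<sigma> m) (\<tau> m) - dG (\<sigma> n) (\<tau> n)) < e"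
      by blast
  qed
  then show ?thesis
    by (simp add: Cauchy_convergent_iff)
qed

lemma dG_tendsto_transfer:
  assumes G: "\<And>n. \<sigma> n \<in> Gcar" "\<And>n. \<sigma>' n \<in> Gcar" "\<And>n. \<tau> n \<in> Gcar" "\<And>n. \<tau>' n \<in> Gcar"
    and \<sigma>: "(\<lambda>n. dG (\<sigma> n) (\<sigma>' n)) \<longlonglongrightarrow> 0" and \<tau>: "(\<lambda>n. dG (\<tau> n) (\<tau>' n)) \<longlonglongrightarrow> 0"
    and L: "(\<lambda>n. dG (\<sigma> n) (\<tau> n)) \<longlonglongrightarrow> L"
  shows "(\<lambda>n. dG (\<sigma>' n) (\<tau>' n)) \<longlonglongrightarrow> L"
proof (rule Lim_transform[OF L])
  have "norm (dG (\<sigma>' n) (\<tau>' n) - dG (\<sigma> n) (\<tau> n)) \<le> norm (dG (\<sigma> n) (\<sigma>' n) + dG (\<tau> n) (\<tau>' n)) * 1"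
    for n
    using dG_diff_le[of "\<sigma>' n" "\<tau>' n" "\<sigma> n" "\<tau> n"] dG_commute dG_nonneg G by simp
  then show "(\<lambda>n. dG (\<sigma>' n) (\<tau>' n) - dG (\<sigma> n) (\<tau> n)) \<longlonglongrightarrow> 0"
    by (intro tendsto_0_le[OF tendsto_add_zero[OF \<sigma> \<tau>]] always_eventually allI)
qed

lemma classS_self: "cauchyG \<sigma> \<Longrightarrow> \<sigma> \<in> classS \<sigma>"
  unfolding classS_def using dG_self cauchyG_Gcar by simp

lemma dS_classS:
  assumes s: "cauchyG \<sigma>" and t: "cauchyG \<tau>"
  shows "(\<lambda>n. dG (\<sigma> n) (\<tau> n)) \<longlonglongrightarrow> dS (classS \<sigma>) (classS \<tau>)"
proof -
  define \<sigma>' where "\<sigma>' = (SOME \<sigma>'. \<sigma>' \<in> classS \<sigma>)"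
  define \<tau>' where "\<tau>' = (SOME \<tau>'. \<tau>' \<in> classS \<tau>)"
  have "\<sigma>' \<in> classS \<sigma>" "\<tau>' \<in> classS \<tau>"
    unfolding \<sigma>'_def \<tau>'_def using classS_self s t by (metis someI)+
  moreover obtain L where L: "(\<lambda>n. dG (\<sigma> n) (\<tau> n)) \<longlonglongrightarrow> L"
    using convergent_dG_cauchyG[OF s t] by (auto simp: convergent_def)
  ultimately have "(\<lambda>n. dG (\<sigma>' n) (\<tau>' n)) \<longlonglongrightarrow> L"
    using dG_tendsto_transfer[OF _ _ _ _ _ _ L] cauchyG_Gcar s t unfolding classS_def by blast
  then have "dS (classS \<sigma>) (classS \<tau>) = L"
    unfolding dS_def \<sigma>'_def[symmetric] \<tau>'_def[symmetric] by (rule limI)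
  then show ?thesis
    using L by simp
qed

lemma dS_classS_nonneg: "cauchyG \<sigma> \<Longrightarrow> cauchyG \<tau> \<Longrightarrow> 0 \<le> dS (classS \<sigma>) (classS \<tau>)"
  using dS_classS by (rule LIMSEQ_le_const) (auto intro: dG_nonneg cauchyG_Gcar)

lemma dS_classS_commute:
  assumes "cauchyG \<sigma>" "cauchyG \<tau>"
  shows "dS (classS \<sigma>) (classS \<tau>) = dS (classS \<tau>) (classS \<sigma>)"
proof -
  have "(\<lambda>n. dG (\<tau> n) (\<sigma> n)) = (\<lambda>n. dG (\<sigma> n) (\<tau> n))"
    using dG_commute cauchyG_Gcar assms by simp
  with dS_classS[OF assms] dS_classS[OF assms(2,1)] show ?thesis
    by (metis LIMSEQ_unique)
qed

lemma dS_classS_triangle: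
  assumes "cauchyG \<rho>" "cauchyG \<sigma>" "cauchyG \<tau>"
  shows "dS (classS \<rho>) (classS \<tau>) \<le> dS (classS \<rho>) (classS \<sigma>) + dS (classS \<sigma>) (classS \<tau>)"
  using dS_classS[of \<rho> \<tau>] tendsto_add[OF dS_classS[of \<rho> \<sigma>] dS_classS[of \<sigma> \<tau>]]
  by (rule LIMSEQ_le) (use assms dG_triangle cauchyG_Gcar in auto)

lemma classS_eqI:
  assumes s: "cauchyG \<sigma>" and t: "cauchyG \<tau>" and d: "(\<lambda>n. dG (\<sigma> n) (\<tau> n)) \<longlonglongrightarrow> 0"
  shows "classS \<sigma> = classS \<tau>"
proof -
  have G: "\<And>n. \<sigma> n \<in> Gcar" "\<And>n. \<tau> n \<in> Gcar"
    using s t cauchyG_Gcar by auto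
  have d': "(\<lambda>n. dG (\<tau> n) (\<sigma> n)) \<longlonglongrightarrow> 0"
    using d dG_commute G by simp
  have "\<rho> \<in> classS \<sigma> \<longleftrightarrow> \<rho> \<in> classS \<tau>" if "cauchyG \<rho>" for \<rho>
  proof -
    have "(\<lambda>n. dG (\<rho> n) (\<rho> n)) \<longlonglongrightarrow> 0"
      using dG_self cauchyG_Gcar[OF that] by simp
    then show ?thesis
      using dG_tendsto_transfer[OF G _ _ d] dG_tendsto_transfer[OF G(2,1) _ _ d'] cauchyG_Gcar[OF that]
      unfolding classS_def by blast
  qed
  then show ?thesis
    unfolding classS_def by blast
qed

lemma classS_eq_if_dS_eq_0:
  assumes "cauchyG \<sigma>" "cauchyG \<tau>" "dS (classS \<sigma>) (classS \<tau>) = 0"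
  shows "classS \<sigma> = classS \<tau>"
  using classS_eqI[OF assms(1,2)] dS_classS[OF assms(1,2)] assms(3) by simp

context
  fixes \<theta> :: "nat \<Rightarrow> nat \<times> pt tm"
  assumes \<theta>_Gcar: "\<And>n. \<theta> n \<in> Gcar"
    and \<theta>_rate: "\<And>n k. n \<le> k \<Longrightarrow> dG (\<theta> n) (\<theta> k) \<le> (1/2)^n"
begin

lemma cauchyG_geometric: "cauchyG \<theta>"
  unfolding cauchyG_def
proof (intro conjI allI impI \<theta>_Gcar)
  fix e :: real
  assume "0 < e"
  then obtain N where N: "(1/2::real)^N < e"
    using real_arch_pow_inv[of e "1/2"] by auto
  have "dG (\<theta> m) (\<theta> n) < e" if "N \<le> m" "N \<le> n" for m n
  proof -
    have "dG (\<theta> m) (\<theta> n) \<le> (1/2)^(min m n)"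
      using \<theta>_rate[of m n] \<theta>_rate[of n m] dG_commute[OF \<theta>_Gcar \<theta>_Gcar]
      by (cases "m \<le> n") (auto simp: min_def)
    also have "\<dots> \<le> (1/2)^N"
      using that by (intro power_decreasing) auto
    finally show ?thesis
      using N by linarith
  qed
  then show "\<exists>N. \<forall>m\<ge>N. \<forall>n\<ge>N. dG (\<theta> m) (\<theta> n) < e"
    by blast
qed

lemma dS_iotaG_geometric_le: "dS (iotaG (\<theta> n)) (classS \<theta>) \<le> (1/2)^n"
  unfolding iotaG_def
  using dS_classS[OF cauchyG_const[OF \<theta>_Gcar[of n]] cauchyG_geometric]
  by (rule LIMSEQ_le_const2) (use \<theta>_rate in auto)

lemma iotaG_geometric_tendsto: "(\<lambda>n. dS (iotaG (\<theta> n)) (classS \<theta>)) \<longlonglongrightarrow> 0"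
proof (rule tendsto_sandwich[OF _ _ tendsto_const LIMSEQ_realpow_zero[of "1/2"]])
  show "\<forall>\<^sub>F n in sequentially. 0 \<le> dS (iotaG (\<theta> n)) (classS \<theta>)"
    using dS_classS_nonneg[OF cauchyG_const[OF \<theta>_Gcar] cauchyG_geometric] by (simp add: iotaG_def)
  show "\<forall>\<^sub>F n in sequentially. dS (iotaG (\<theta> n)) (classS \<theta>) \<le> (1/2)^n"
    using dS_iotaG_geometric_le by simp
qed simp_all

lemma iotaG_limit_unique:
  assumes s: "s \<in> Scar" and lim: "(\<lambda>n. dS (iotaG (\<theta> n)) s) \<longlonglongrightarrow> 0"
  shows "s = classS \<theta>"
proof -
  obtain \<sigma> where \<sigma>: "cauchyG \<sigma>" and s\<sigma>: "s = classS \<sigma>"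
    using s unfolding Scar_def by blast
  have c: "cauchyG \<theta>" "\<And>n. cauchyG (\<lambda>_. \<theta> n)"
    using cauchyG_geometric cauchyG_const[OF \<theta>_Gcar] by auto
  have "dS (classS \<theta>) s \<le> (1/2)^n + dS (iotaG (\<theta> n)) s" for n
    using dS_classS_triangle[OF c(1) c(2)[of n] \<sigma>] dS_classS_commute[OF c(1) c(2)[of n]]
      dS_iotaG_geometric_le[of n] unfolding s\<sigma> iotaG_def by linarith
  moreover have "(\<lambda>n. (1/2)^n + dS (iotaG (\<theta> n)) s) \<longlonglongrightarrow> 0"
    using tendsto_add_zero[OF LIMSEQ_realpow_zero[of "1/2 :: real"] lim] by simp
  ultimately have "dS (classS \<theta>) s \<le> 0"
    by (intro LIMSEQ_le[OF tendsto_const]) auto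
  then have "dS (classS \<theta>) (classS \<sigma>) = 0"
    using dS_classS_nonneg[OF c(1) \<sigma>] s\<sigma> by simp
  then show ?thesis
    using classS_eq_if_dS_eq_0[OF c(1) \<sigma>] s\<sigma> by simp
qed

lemma the_iotaG_limit: "(THE s. s \<in> Scar \<and> (\<lambda>n. dS (iotaG (\<theta> n)) s) \<longlonglongrightarrow> 0) = classS \<theta>"
proof (rule the_equality)
  show "classS \<theta> \<in> Scar \<and> (\<lambda>n. dS (iotaG (\<theta> n)) (classS \<theta>)) \<longlonglongrightarrow> 0"
    using classS_in_Scar[OF cauchyG_geometric] iotaG_geometric_tendsto by blast
next
  fix s
  assume "s \<in> Scar \<and> (\<lambda>n. dS (iotaG (\<theta> n)) s) \<longlonglongrightarrow> 0"
  then show "s = classS \<theta>"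
    using iotaG_limit_unique by blast
qed

end


section \<open>Words\<close>

lemma wordT_in_car: "z \<in> car Y \<Longrightarrow> wordT Y w z \<in> car (Fpow Y (length w))"
  by (induction w) (simp_all add: Fpow_Suc tens_in_car_tensor)

lemma wordT_tensor: "wordT (tensor Y) w (tens Y m v) = wordT Y (w @ [m]) v"
  by (induction w) (simp_all add: Fpow_tensor)

lemma dst_wordT_common_prefix:
  assumes t: "tripointed Y" and a: "a \<in> car Y" and b: "b \<in> car Y" and l: "length v = length v'"
  shows "dst (Fpow Y (length w + length v)) (wordT Y (w @ v) a) (wordT Y (w @ v') b) \<le> (1/2)^(length w)"
proof (induction w)
  case Nil
  show ?case
    using wordT_in_car[OF a, of v] wordT_in_car[OF b, of v'] l tripointed_dst_le_1[OF tripointed_Fpow[OF t]]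
    by simp
next
  case (Cons m w)
  have "wordT Y (w @ v) a \<in> car (Fpow Y (length w + length v))"
    "wordT Y (w @ v') b \<in> car (Fpow Y (length w + length v))"
    using wordT_in_car[OF a, of "w @ v"] wordT_in_car[OF b, of "w @ v'"] l by auto
  then show ?case
    using Cons qd_same_copy[OF tripointed_Fpow[OF t]] l by (simp add: Fpow_Suc dst_tensor)
qed

lemma Base_in_car_embI: "Base P \<in> car embI"
  by (simp add: car_embI)

lemma emb_wordT: "length w = n \<Longrightarrow> emb n (wordT embI w (Base P)) = wordT embI (w @ [mOf P]) (Base P)"
proof (induction w arbitrary: n)
  case Nil
  then show ?case
    by (simp add: emb_0 bang_def liftB_def)
next
  case (Cons m w)
  then obtain k where n: "n = Suc k" "length w = k"
    by auto
  have "preserves_corners (FI k) (FI (Suc k)) (emb k)"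
    using isometric_embedding_emb by (simp add: isometric_embedding_def)
  then show ?case
    using Cons.IH[OF n(2)] n by (simp add: emb_Suc Mlift_tens)
qed

lemma embUp_wordT:
  "length w = n \<Longrightarrow> embUp n j (wordT embI w (Base P)) = wordT embI (w @ replicate j (mOf P)) (Base P)"
  by (induction j) (simp_all add: emb_wordT replicate_append_same)

lemma theta_in_Gcar: "theta ms z n \<in> Gcar"
  unfolding theta_def Gcar_def using wordT_in_car[OF Base_in_car_embI, of "map ms [0..<n]"] by simp

lemma dG_theta_le:
  assumes "n \<le> k"
  shows "dG (theta ms z n) (theta ms z k) \<le> (1/2)^n"
proof -
  define w where "w = map ms [0..<n]"
  define v where "v = map ms [n..<k]"
  have lw: "length w = n" and lv: "length v = k - n"
    unfolding w_def v_def by simp_all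
  have wk: "map ms [0..<k] = w @ v"
    unfolding w_def v_def using assms by (metis map_append le_add_diff_inverse upt_add_eq_append zero_le)
  have "dG (theta ms z n) (theta ms z k)
      = dst (FI (length w + length v)) (wordT embI (w @ replicate (k - n) (mOf z)) (Base z))
          (wordT embI (w @ v) (Base z))"
    using assms embUp_wordT[OF lw] lw lv by (simp add: theta_def w_def[symmetric] wk max_def)
  also have "\<dots> \<le> (1/2)^n"
    using dst_wordT_common_prefix[OF tripointed_embI Base_in_car_embI Base_in_car_embI, of _ v w] lv lw
    by simp
  finally show ?thesis .
qed

lemma cauchyG_theta: "cauchyG (theta ms z)"
  by (rule cauchyG_geometric[OF theta_in_Gcar dG_theta_le])

lemma fmap_eq_classS: "fmap X e z x = classS (theta (SOME ms. repr X e x ms) z)"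
  unfolding fmap_def using the_iotaG_limit[OF theta_in_Gcar dG_theta_le] by simp

lemma fmap_in_Scar: "fmap X e z x \<in> Scar"
  unfolding fmap_eq_classS by (rule classS_in_Scar[OF cauchyG_theta])

lemma dst_wordT_Cons:
  "length w = n \<Longrightarrow> length w' = n \<Longrightarrow> dst (Fpow Y (Suc n)) (wordT Y (m # w) y) (wordT Y (k # w') y')
    = qd (Fpow Y n) (tens (Fpow Y n) m (wordT Y w y)) (tens (Fpow Y n) k (wordT Y w' y'))"
  by (simp add: Fpow_Suc dst_tensor)

lemma wordT_near_corner_transfer:
  fixes Y :: "'a tm tsp" and Y' :: "'b tm tsp"
  assumes t: "tripointed Y" and t': "tripointed Y'" and z: "z \<in> car Y'"
  shows "length w = n \<Longrightarrow> y \<in> car Y \<Longrightarrow>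
    dst (Fpow Y n) (wordT Y w y) (corner P (Fpow Y n)) < (1/4) * (1/2)^n \<Longrightarrow>
    dst (Fpow Y' n) (wordT Y' w z) (corner P (Fpow Y' n)) \<le> (1/2)^n"
proof (induction n arbitrary: w)
  case 0
  then show ?case
    using tripointed_dst_le_1[OF t' z corner_in_car[OF t']] by simp
next
  case (Suc n)
  obtain m w1 where w: "w = m # w1" "length w1 = n"
    using Suc.prems(1) by (cases w) auto
  have tn: "tripointed (Fpow Y n)" "tripointed (Fpow Y' n)"
    using tripointed_Fpow t t' by auto
  have a: "wordT Y w1 y \<in> car (Fpow Y n)" "wordT Y' w1 z \<in> car (Fpow Y' n)"
    using wordT_in_car[OF Suc.prems(2), of w1] wordT_in_car[OF z, of w1] w by simp_all
  have H: "qd (Fpow Y n) (tens (Fpow Y n) m (wordT Y w1 y)) (tens (Fpow Y n) (mOf P) (corner P (Fpow Y n)))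
      < (1/4) * (1/2)^(Suc n)"
    using Suc.prems(3) w by (simp add: Fpow_Suc dst_tensor corner_tensor)
  show ?case
  proof (cases "m = mOf P")
    case True
    then have "dst (Fpow Y n) (wordT Y w1 y) (corner P (Fpow Y n)) < (1/4) * (1/2)^n"
      using H qd_same_copy[OF tn(1) a(1) corner_in_car[OF tn(1)]] by simp
    then show ?thesis
      using Suc.IH[OF w(2) Suc.prems(2)] w True qd_same_copy[OF tn(2) a(2) corner_in_car[OF tn(2)]]
      by (simp add: Fpow_Suc dst_tensor corner_tensor)
  next
    case False
    have "dst (Fpow Y n) (corner P (Fpow Y n)) (corner (glue (mOf P) m) (Fpow Y n)) = 1"
      using dst_corners[OF tn(1)] glue_neq[OF False] by simp
    with qd_other_copy_ge[OF tn(1) a(1) corner_in_car[OF tn(1), of P] False]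
    have "1/2 \<le> qd (Fpow Y n) (tens (Fpow Y n) m (wordT Y w1 y)) (tens (Fpow Y n) (mOf P) (corner P (Fpow Y n)))"
      using tripointed_dst_nonneg[OF tn(1) a(1) corner_in_car[OF tn(1)]] by (simp add: min_def)
    moreover have "(1/4) * (1/2::real)^(Suc n) \<le> 1/8"
      by (simp add: power_le_one)
    ultimately show ?thesis
      using H by linarith
  qed
qed

text \<open>Closeness at scale \<open>2\<^sup>-\<^sup>n / 4\<close> in \<open>F\<^sup>n Y\<close> forces two words to agree letter by letter, except where
  they pass between copies through a glued pair of corners, and there the remaining letters must lead
  to that corner.  So the same words over any other space, with any base point, are \<open>2 \<cdot> 2\<^sup>-\<^sup>n\<close> close.\<close>
lemma wordT_near_transfer:
  fixes Y :: "'a tm tsp" and Y' :: "'b tm tsp"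
  assumes t: "tripointed Y" and t': "tripointed Y'" and z: "z \<in> car Y'"
  shows "length w = n \<Longrightarrow> length w' = n \<Longrightarrow> y \<in> car Y \<Longrightarrow> y' \<in> car Y \<Longrightarrow>
    dst (Fpow Y n) (wordT Y w y) (wordT Y w' y') < (1/4) * (1/2)^n \<Longrightarrow>
    dst (Fpow Y' n) (wordT Y' w z) (wordT Y' w' z) \<le> 2 * (1/2)^n"
proof (induction n arbitrary: w w')
  case 0
  then show ?case
    using tripointed_dst_self[OF t' z] by simp
next
  case (Suc n)
  obtain m w1 k w2 where w: "w = m # w1" "w' = k # w2" "length w1 = n" "length w2 = n"
    using Suc.prems(1,2) by (cases w; cases w') auto
  have tn: "tripointed (Fpow Y n)" "tripointed (Fpow Y' n)"
    using tripointed_Fpow t t' by auto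
  have a: "wordT Y w1 y \<in> car (Fpow Y n)" "wordT Y w2 y' \<in> car (Fpow Y n)"
    and a': "wordT Y' w1 z \<in> car (Fpow Y' n)" "wordT Y' w2 z \<in> car (Fpow Y' n)"
    using wordT_in_car[OF Suc.prems(3), of w1] wordT_in_car[OF Suc.prems(4), of w2]
      wordT_in_car[OF z, of w1] wordT_in_car[OF z, of w2] w(3,4) by simp_all
  have H: "qd (Fpow Y n) (tens (Fpow Y n) m (wordT Y w1 y)) (tens (Fpow Y n) k (wordT Y w2 y'))
      < (1/4) * (1/2)^(Suc n)"
    using Suc.prems(5) unfolding w(1,2) dst_wordT_Cons[OF w(3,4)] .
  have goal: "dst (Fpow Y' (Suc n)) (wordT Y' w z) (wordT Y' w' z)
      = qd (Fpow Y' n) (tens (Fpow Y' n) m (wordT Y' w1 z)) (tens (Fpow Y' n) k (wordT Y' w2 z))"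
    unfolding w(1,2) by (rule dst_wordT_Cons[OF w(3,4)])
  show ?case
  proof (cases "m = k")
    case True
    then have "dst (Fpow Y n) (wordT Y w1 y) (wordT Y w2 y') < (1/4) * (1/2)^n"
      using H qd_same_copy[OF tn(1) a] by simp
    then show ?thesis
      using Suc.IH[OF w(3,4) Suc.prems(3,4)] True qd_same_copy[OF tn(2) a', of k] goal by simp
  next
    case False
    have "(1/4) * (1/2::real)^(Suc n) \<le> 1/4"
      using power_le_one[of "1/2 :: real" "Suc n"] by simp
    then have "dst (Fpow Y n) (wordT Y w1 y) (corner (glue m k) (Fpow Y n)) < (1/4) * (1/2)^n"
      "dst (Fpow Y n) (wordT Y w2 y') (corner (glue k m) (Fpow Y n)) < (1/4) * (1/2)^n"
      using qd_other_copy_small[OF tn(1) a False H] by simp_all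
    then have "dst (Fpow Y' n) (wordT Y' w1 z) (corner (glue m k) (Fpow Y' n)) \<le> (1/2)^n"
      "dst (Fpow Y' n) (wordT Y' w2 z) (corner (glue k m) (Fpow Y' n)) \<le> (1/2)^n"
      using wordT_near_corner_transfer[OF t t' z] w(3,4) Suc.prems(3,4) by blast+
    then show ?thesis
      using qd_other_copy_le[OF tn(2) a' False] goal by simp
  qed
qed

section \<open>The map from a coalgebra to \<open>S\<close>\<close>

lemma cont_sp_comp:
  assumes "cont_sp X Y f" "cont_sp Y Z g" "f ` car X \<subseteq> car Y"
  shows "cont_sp X Z (g \<circ> f)"
  unfolding cont_sp_def
proof (intro ballI allI impI)
  fix x and \<epsilon> :: real
  assume x: "x \<in> car X" and \<epsilon>: "0 < \<epsilon>"
  then obtain \<eta> where "0 < \<eta>" and \<eta>: "\<forall>v\<in>car Y. dst Y (f x) v < \<eta> \<longrightarrow> dst Z (g (f x)) (g v) < \<epsilon>"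
    using assms(2,3) unfolding cont_sp_def by blast
  then obtain \<delta> where "0 < \<delta>" and \<delta>: "\<forall>y\<in>car X. dst X x y < \<delta> \<longrightarrow> dst Y (f x) (f y) < \<eta>"
    using assms(1) x unfolding cont_sp_def by blast
  have "dst Z ((g \<circ> f) x) ((g \<circ> f) y) < \<epsilon>" if "y \<in> car X" "dst X x y < \<delta>" for y
    using that \<delta> \<eta> assms(3) by auto
  with \<open>0 < \<delta>\<close> show "\<exists>\<delta>>0. \<forall>y\<in>car X. dst X x y < \<delta> \<longrightarrow> dst Z ((g \<circ> f) x) ((g \<circ> f) y) < \<epsilon>"
    by blast
qed

lemma coalgebraD:
  assumes "coalgebra X e"
  shows "tripointed X" and "\<And>x. x \<in> car X \<Longrightarrow> e x \<in> car (FX X)" and "cont_sp X (FX X) e"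
    and "preserves_corners X (FX X) e"
  using assms unfolding coalgebra_def morphism_def preserves_corners_iff by auto

lemma FX_Fpow: "Fpow (FX X) n = Fpow (embX X) (Suc n)"
  by (simp add: FX_def Fpow_tensor)

context
  fixes X :: "'a tsp" and e :: "'a \<Rightarrow> 'a tm"
  assumes co: "coalgebra X e"
begin

lemma tripointed_Fpow_embX: "tripointed (Fpow (embX X) n)"
  using tripointed_Fpow tripointed_embX coalgebraD(1)[OF co] by blast

lemma preserves_corners_Mmap:
  "preserves_corners (Fpow (embX X) n) (Fpow (embX X) (Suc n)) (Mmap (FX X) n (liftB e))"
proof (induction n)
  case 0
  then show ?case
    using coalgebraD(4)[OF co] by (simp add: preserves_corners_def corner_embX liftB_def FX_def Fpow_Suc)
next
  case (Suc n)
  have "preserves_corners (tensor (Fpow (embX X) n)) (tensor (Fpow (embX X) (Suc n)))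
      (Mlift (Fpow (embX X) (Suc n)) (Mmap (FX X) n (liftB e)))"
    by (rule preserves_corners_Mlift[OF Suc.IH])
  then show ?case
    by (simp only: Mmap_Suc_Mlift FX_Fpow Fpow_Suc)
qed

lemma Mmap_in_car: "Mmap (FX X) n (liftB e) ` car (Fpow (embX X) n) \<subseteq> car (Fpow (embX X) (Suc n))"
proof (induction n)
  case 0
  then show ?case
    using coalgebraD(2)[OF co] by (auto simp: car_embX liftB_def FX_def Fpow_Suc)
next
  case (Suc n)
  have "Mlift (Fpow (embX X) (Suc n)) (Mmap (FX X) n (liftB e)) ` car (tensor (Fpow (embX X) n))
      \<subseteq> car (tensor (Fpow (embX X) (Suc n)))"
    using Mlift_in_car[OF preserves_corners_Mmap Suc.IH] by blast
  then show ?case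
    by (simp only: Mmap_Suc_Mlift FX_Fpow Fpow_Suc)
qed

lemma cont_sp_Mmap: "cont_sp (Fpow (embX X) n) (Fpow (embX X) (Suc n)) (Mmap (FX X) n (liftB e))"
proof (induction n)
  case 0
  then show ?case
    using coalgebraD(3)[OF co] by (auto simp: cont_sp_def car_embX liftB_def FX_def Fpow_Suc)
next
  case (Suc n)
  have "cont_sp (tensor (Fpow (embX X) n)) (tensor (Fpow (embX X) (Suc n)))
      (Mlift (Fpow (embX X) (Suc n)) (Mmap (FX X) n (liftB e)))"
    by (rule cont_sp_Mlift[OF tripointed_Fpow_embX tripointed_Fpow_embX preserves_corners_Mmap Mmap_in_car Suc.IH])
  then show ?case
    by (simp only: Mmap_Suc_Mlift FX_Fpow Fpow_Suc)
qed

lemma chi_in_car: "x \<in> car X \<Longrightarrow> chi X e x n \<in> car (Fpow (embX X) n)"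
  by (induction n) (use Mmap_in_car in \<open>auto simp: car_embX\<close>)

lemma cont_sp_chi: "cont_sp X (Fpow (embX X) n) (\<lambda>x. chi X e x n)"
proof (induction n)
  case 0
  then show ?case
    by (auto simp: cont_sp_def)
next
  case (Suc n)
  have "(\<lambda>x. chi X e x (Suc n)) = Mmap (FX X) n (liftB e) \<circ> (\<lambda>x. chi X e x n)"
    by auto
  then show ?case
    using cont_sp_comp[OF Suc cont_sp_Mmap] chi_in_car by auto
qed

lemma Mmap_wordT: "length w = n \<Longrightarrow> Mmap (FX X) n (liftB e) (wordT (embX X) w (Base x)) = wordT (FX X) w (e x)"
proof (induction w arbitrary: n)
  case Nil
  then show ?case
    by (simp add: liftB_def)
next
  case (Cons m w)
  then obtain k where n: "n = Suc k" "length w = k"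
    by auto
  have "preserves_corners (Fpow (embX X) k) (Fpow (FX X) k) (Mmap (FX X) k (liftB e))"
    using preserves_corners_Mmap[of k] unfolding FX_Fpow .
  then show ?case
    using Cons.IH[OF n(2)] n by (simp add: Mmap_Suc_Mlift Mlift_tens)
qed

text \<open>Unfolding \<open>e\<close> once more at the innermost position appends one letter to the word.\<close>
lemma repr_exists:
  assumes x: "x \<in> car X"
  shows "\<exists>ms. repr X e x ms"
proof -
  have "\<exists>p. snd p \<in> car X \<and> e x' = tens (embX X) (fst p) (Base (snd p))" if "x' \<in> car X" for x'
    using coalgebraD(2)[OF co that] by (auto simp: FX_def car_tensor car_embX)
  then obtain next_step where nx: "\<And>x'. x' \<in> car X \<Longrightarrow>
      snd (next_step x') \<in> car X \<and> e x' = tens (embX X) (fst (next_step x')) (Base (snd (next_step x')))"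
    by metis
  define xs where "xs n = ((snd \<circ> next_step) ^^ n) x" for n
  define ms where "ms n = fst (next_step (xs n))" for n
  have "xs n \<in> car X \<and> chi X e x n = wordT (embX X) (map ms [0..<n]) (Base (xs n))" for n
  proof (induction n)
    case 0
    then show ?case
      using x by (simp add: xs_def)
  next
    case (Suc n)
    then have "chi X e x (Suc n) = wordT (FX X) (map ms [0..<n]) (e (xs n))"
      by (simp add: Mmap_wordT)
    also have "\<dots> = wordT (embX X) (map ms [0..<Suc n]) (Base (xs (Suc n)))"
      using nx Suc by (simp add: ms_def xs_def FX_def wordT_tensor)
    finally show ?case
      using nx Suc by (simp add: xs_def)
  qed
  then show ?thesis
    unfolding repr_def by blast
qed

lemma chi_corner: "chi X e (corner P X) n = corner P (Fpow (embX X) n)"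
  using preserves_corners_Mmap by (induction n) (simp_all add: corner_embX preserves_corners_def)

end

lemma repr_some: "coalgebra X e \<Longrightarrow> x \<in> car X \<Longrightarrow> repr X e x (SOME ms. repr X e x ms)"
  using repr_exists by (metis someI_ex)

lemma dG_theta_near:
  assumes co: "coalgebra X e" and r1: "repr X e x ms1" and r2: "repr X e y ms2"
    and d: "dst (Fpow (embX X) n) (chi X e x n) (chi X e y n) < (1/4) * (1/2)^n"
  shows "dG (theta ms1 z n) (theta ms2 z n) \<le> 2 * (1/2)^n"
proof -
  obtain xs1 xs2 where x1: "\<And>n. xs1 n \<in> car X \<and> chi X e x n = wordT (embX X) (map ms1 [0..<n]) (Base (xs1 n))"
    and x2: "\<And>n. xs2 n \<in> car X \<and> chi X e y n = wordT (embX X) (map ms2 [0..<n]) (Base (xs2 n))"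
    using r1 r2 unfolding repr_def by blast
  have "Base (xs1 n) \<in> car (embX X)" "Base (xs2 n) \<in> car (embX X)"
    using x1 x2 by (auto simp: car_embX)
  then show ?thesis
    using wordT_near_transfer[OF tripointed_embX[OF coalgebraD(1)[OF co]] tripointed_embI Base_in_car_embI]
      d x1 x2 by (simp add: theta_def)
qed

lemma dG_theta_corner_le:
  assumes co: "coalgebra X e" and r: "repr X e (corner P X) ms"
  shows "dG (theta ms z n) (0, Base P) \<le> (1/2)^n"
proof -
  have t: "tripointed X"
    by (rule coalgebraD(1)[OF co])
  obtain xs where xs: "xs n \<in> car X" and chi: "chi X e (corner P X) n = wordT (embX X) (map ms [0..<n]) (Base (xs n))"
    using r unfolding repr_def by blast
  have "wordT (embX X) (map ms [0..<n]) (Base (xs n)) = corner P (Fpow (embX X) n)"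
    using chi chi_corner[OF co, of P n] by simp
  then have "dst (Fpow (embX X) n) (wordT (embX X) (map ms [0..<n]) (Base (xs n))) (corner P (Fpow (embX X) n)) = 0"
    using tripointed_dst_self[OF tripointed_Fpow_embX[OF co] corner_in_car[OF tripointed_Fpow_embX[OF co]]]
    by simp
  moreover have "Base (xs n) \<in> car (embX X)"
    using xs by (simp add: car_embX)
  ultimately have "dst (FI n) (wordT embI (map ms [0..<n]) (Base z)) (corner P (FI n)) \<le> (1/2)^n"
    using wordT_near_corner_transfer[OF tripointed_embX[OF t] tripointed_embI Base_in_car_embI,
        of "map ms [0..<n]" n "Base (xs n)" P]
    by simp
  moreover have "embUp 0 n (Base P) = corner P (FI n)"
    using isometric_embedding_embUp[of 0 n] by (simp add: isometric_embedding_def preserves_corners_def corner_embI)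
  ultimately show ?thesis
    by (simp add: theta_def)
qed

lemma fmap_corner:
  assumes co: "coalgebra X e"
  shows "fmap X e z (corner P X) = iotaG (0, Base P)"
proof -
  define ms where "ms = (SOME ms. repr X e (corner P X) ms)"
  have r: "repr X e (corner P X) ms"
    unfolding ms_def by (rule repr_some[OF co corner_in_car[OF coalgebraD(1)[OF co]]])
  have G: "(0, Base P) \<in> Gcar"
    by (simp add: Gcar_def Base_in_car_embI)
  have "(\<lambda>n. dG (theta ms z n) (0, Base P)) \<longlonglongrightarrow> 0"
    using dG_nonneg[OF theta_in_Gcar G] dG_theta_corner_le[OF co r]
    by (intro tendsto_sandwich[OF _ _ tendsto_const LIMSEQ_realpow_zero[of "1/2"]]) auto
  then have "classS (theta ms z) = iotaG (0, Base P)"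
    unfolding iotaG_def by (rule classS_eqI[OF cauchyG_theta cauchyG_const[OF G]])
  then show ?thesis
    unfolding fmap_eq_classS ms_def .
qed

lemma dS_classS_theta_le:
  assumes "dG (theta ms z n) (theta ms' z n) \<le> c"
  shows "dS (classS (theta ms z)) (classS (theta ms' z)) \<le> c + 2 * (1/2)^n"
proof -
  have "dG (theta ms z k) (theta ms' z k) \<le> c + 2 * (1/2)^n" if k: "n \<le> k" for k
  proof -
    have "dG (theta ms z k) (theta ms' z k)
        \<le> dG (theta ms z n) (theta ms z k) + dG (theta ms z n) (theta ms' z n) + dG (theta ms' z n) (theta ms' z k)"
      using dG_triangle[OF theta_in_Gcar[of ms z k] theta_in_Gcar[of ms z n] theta_in_Gcar[of ms' z k]]
        dG_triangle[OF theta_in_Gcar[of ms z n] theta_in_Gcar[of ms' z n] theta_in_Gcar[of ms' z k]]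
        dG_commute[OF theta_in_Gcar[of ms z k] theta_in_Gcar[of ms z n]] by linarith
    then show ?thesis
      using assms dG_theta_le[OF k, of ms z] dG_theta_le[OF k, of ms' z] by linarith
  qed
  then have "\<exists>N. \<forall>k\<ge>N. dG (theta ms z k) (theta ms' z k) \<le> c + 2 * (1/2)^n"
    by blast
  then show ?thesis
    by (rule LIMSEQ_le_const2[OF dS_classS[OF cauchyG_theta cauchyG_theta]])
qed

lemma dS_fmap_le:
  assumes co: "coalgebra X e" and x: "x \<in> car X" and y: "y \<in> car X"
    and d: "dst (Fpow (embX X) n) (chi X e x n) (chi X e y n) < (1/4) * (1/2)^n"
  shows "dS (fmap X e z x) (fmap X e z y) \<le> 4 * (1/2)^n"
  using dS_classS_theta_le[OF dG_theta_near[OF co repr_some[OF co x] repr_some[OF co y] d]]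
  unfolding fmap_eq_classS by simp

lemma cont_sp_fmap:
  assumes co: "coalgebra X e"
  shows "cont_sp X Ssp (fmap X e z)"
  unfolding cont_sp_def
proof (intro ballI allI impI)
  fix x and \<epsilon> :: real
  assume x: "x \<in> car X" and \<epsilon>: "0 < \<epsilon>"
  obtain n where n: "(1/2::real)^n < \<epsilon> / 4"
    using real_arch_pow_inv[of "\<epsilon> / 4" "1/2"] \<epsilon> by auto
  have "0 < (1/4) * (1/2::real)^n"
    by simp
  then obtain \<delta> where "0 < \<delta>"
    and \<delta>: "\<forall>y\<in>car X. dst X x y < \<delta> \<longrightarrow> dst (Fpow (embX X) n) (chi X e x n) (chi X e y n) < (1/4) * (1/2)^n"
    using cont_sp_chi[OF co, of n] x unfolding cont_sp_def by blast
  then have "dst Ssp (fmap X e z x) (fmap X e z y) < \<epsilon>" if "y \<in> car X" "dst X x y < \<delta>" for y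
    using dS_fmap_le[OF co x, of y n z] that n by (simp add: Ssp_def)
  with \<open>0 < \<delta>\<close> show "\<exists>\<delta>>0. \<forall>y\<in>car X. dst X x y < \<delta> \<longrightarrow> dst Ssp (fmap X e z x) (fmap X e z y) < \<epsilon>"
    by blast
qed

theorem mainTheorem7:
  fixes X :: "'a tsp" and e :: "'a \<Rightarrow> 'a tm" and z :: pt
  assumes "coalgebra X e"
  shows "cont_sp X Ssp (fmap X e z) \<and> morphism X Ssp (fmap X e z)"
proof -
  have "fmap X e z (pT X) = pT Ssp" "fmap X e z (pL X) = pL Ssp" "fmap X e z (pR X) = pR Ssp"
    using fmap_corner[OF assms, of z PT] fmap_corner[OF assms, of z PL] fmap_corner[OF assms, of z PR]
    by (simp_all add: Ssp_def)
  then show ?thesis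
    using cont_sp_fmap[OF assms] fmap_in_Scar by (auto simp: morphism_def Ssp_def)
qed

end
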